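(* Let $n\ge2$ even, $\alpha\in\mathbb{N}$, $\beta>\frac{n+3}{2\alpha}$, let $f\in C^n(\mathbb{R})$ with $f^{(n)}\in L_1(\mathbb{R})$, and let $\xi>0$. Then $$\|K(x)\|_1\le\frac{1}{6\Gamma(\frac{1}{2\alpha})\Gamma(\beta-\frac{1}{2\alpha})(n-1)!}\Big[3\Gamma\left(\tfrac{n+1}{2\alpha}\right)\Gamma\left(\beta-\tfrac{n+1}{2\alpha}\right)+3\Gamma\left(\tfrac{n+2}{2\alpha}\right)\Gamma\left(\beta-\tfrac{n+2}{2\alpha}\right)+\Gamma\left(\tfrac{n+3}{2\alpha}\right)\Gamma\left(\beta-\tfrac{n+3}{2\alpha}\right)\Big]\omega_2(f^{(n)},\xi)_1\,\xi^n.$$ Hence $\|K(x)\|_1\to0$ as $\xi\to0$. If additionally $f^{(2m)}\in L_1(\mathbb{R})$ for $m=1,\dots,\frac n2$, then $\|M_\xi(f)-f\|_1\to0$ as $\xi\to0$.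
   Context: For $\alpha\in\mathbb{N}$, $\beta>\frac{1}{2\alpha}$, $\xi>0$, let $W=\frac{\Gamma(\beta)\alpha\xi^{2\alpha\beta-1}}{\Gamma(\frac{1}{2\alpha})\Gamma(\beta-\frac{1}{2\alpha})}$ and define $M_\xi(f;x)=W\int_{-\infty}^{\infty}f(x+y)\frac{1}{(y^{2\alpha}+\xi^{2\alpha})^{\beta}}dy$, $x\in\mathbb{R}$. Let $$K(x):=M_\xi(f;x)-f(x)-\sum_{\rho=1}^{n/2}\frac{f^{(2\rho)}(x)}{(2\rho)!}\frac{\Gamma(\frac{2\rho+1}{2\alpha})\Gamma(\beta-\frac{2\rho+1}{2\alpha})}{\Gamma(\frac{1}{2\alpha})\Gamma(\beta-\frac{1}{2\alpha})}\xi^{2\rho}.$$ For $g\in L_1(\mathbb{R})$, $\Delta_t^2g(x)=g(x+2t)-2g(x+t)+g(x)$ and $\omega_2(g,h)_1=\sup_{|t|\le h}\|\Delta_t^2g(x)\|_{1,x}$, $h>0$. *)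

theory Defs
  imports "HOL-Analysis.Analysis"
begin

definition nderiv :: "nat \<Rightarrow> (real \<Rightarrow> real) \<Rightarrow> real \<Rightarrow> real" where
  "nderiv k f = (deriv ^^ k) f"

definition Cn :: "nat \<Rightarrow> (real \<Rightarrow> real) \<Rightarrow> bool" where
  "Cn n f \<longleftrightarrow> (\<forall>k<n. nderiv k f differentiable_on UNIV) \<and> continuous_on UNIV (nderiv n f)"

definition Wconst :: "nat \<Rightarrow> real \<Rightarrow> real \<Rightarrow> real" where
  "Wconst \<alpha> \<beta> \<xi> = Gamma \<beta> * real \<alpha> * \<xi> powr (2 * real \<alpha> * \<beta> - 1)
      / (Gamma (1 / (2 * real \<alpha>)) * Gamma (\<beta> - 1 / (2 * real \<alpha>)))"

definition Mxi :: "nat \<Rightarrow> real \<Rightarrow> real \<Rightarrow> (real \<Rightarrow> real) \<Rightarrow> real \<Rightarrow> real" where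
  "Mxi \<alpha> \<beta> \<xi> f x = Wconst \<alpha> \<beta> \<xi> *
      (\<integral>y. f (x + y) * (1 / (y ^ (2 * \<alpha>) + \<xi> ^ (2 * \<alpha>)) powr \<beta>) \<partial>lborel)"

definition Kfun :: "nat \<Rightarrow> nat \<Rightarrow> real \<Rightarrow> real \<Rightarrow> (real \<Rightarrow> real) \<Rightarrow> real \<Rightarrow> real" where
  "Kfun n \<alpha> \<beta> \<xi> f x = Mxi \<alpha> \<beta> \<xi> f x - f x
     - (\<Sum>\<rho>=1..n div 2. nderiv (2 * \<rho>) f x / fact (2 * \<rho>)
          * (Gamma ((2 * real \<rho> + 1) / (2 * real \<alpha>)) * Gamma (\<beta> - (2 * real \<rho> + 1) / (2 * real \<alpha>))
             / (Gamma (1 / (2 * real \<alpha>)) * Gamma (\<beta> - 1 / (2 * real \<alpha>))))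
          * \<xi> ^ (2 * \<rho>))"

definition omega2 :: "(real \<Rightarrow> real) \<Rightarrow> real \<Rightarrow> real" where
  "omega2 g h = (SUP t\<in>{-h..h}. \<integral>x. \<bar>g (x + 2 * t) - 2 * g (x + t) + g x\<bar> \<partial>lborel)"

definition L1norm :: "(real \<Rightarrow> real) \<Rightarrow> ennreal" where
  "L1norm g = (\<integral>\<^sup>+ x. ennreal \<bar>g x\<bar> \<partial>lborel)"

end

theory Submission
  imports Defs
begin

text \<open>
  Folding the integral over \<open>y < 0\<close> onto \<open>y > 0\<close> with the even kernel \<open>k\<close> gives
  \<open>K(x) = W \<integral>\<^sub>0\<^sup>\<infinity> k(y) R(x, y) dy\<close>, where \<open>R\<close> is \<open>f(x + y) + f(x - y)\<close> minus its even Taylor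
  terms up to order \<open>n\<close>: the odd terms cancel, and the even moments of \<open>W k\<close> are exactly the
  coefficients subtracted in \<open>K\<close>. By Taylor's formula with integral remainder,
  \<open>|R(x, y)| \<le> y^(n-1)/(n-1)! \<integral>\<^sub>0\<^sup>y |f^(n)(x + t) + f^(n)(x - t) - 2 f^(n)(x)| dt\<close>, and after Fubini
  the \<open>x\<close>-integral of the integrand is \<open>\<parallel>\<Delta>\<^sub>t\<^sup>2 f^(n)\<parallel>\<^sub>1 \<le> (1 + t/\<xi>)\<^sup>2 \<omega>\<^sub>2(f^(n), \<xi>)\<^sub>1\<close>
  (write \<open>t = m h\<close> with \<open>h \<le> \<xi>\<close> and expand \<open>\<Delta>\<^sub>t\<^sup>2\<close> into \<open>m\<^sup>2\<close> shifted copies of \<open>\<Delta>\<^sub>h\<^sup>2\<close>).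
  Integrating \<open>(1 + t/\<xi>)\<^sup>2\<close> over \<open>[0, y]\<close> leaves the moments of orders \<open>n\<close>, \<open>n + 1\<close>, \<open>n + 2\<close>
  of \<open>k\<close> on the half-line, which are Beta integrals and give the three Gamma products.
  Since \<open>\<omega>\<^sub>2(g, \<xi>)\<^sub>1 \<le> 4\<parallel>g\<parallel>\<^sub>1\<close>, the bound is \<open>O(\<xi>\<^sup>n)\<close>, and the subtracted Taylor terms
  are \<open>O(\<xi>\<^sup>2)\<close> in \<open>L\<^sub>1\<close> when the even derivatives are integrable.
\<close>

section \<open>Integrals over the half-line\<close>

lemma nn_integral_Gamma_scaled:
  fixes c z :: real
  assumes c: "c > 0" and z: "z > 0"
  shows "(\<integral>\<^sup>+t. ennreal (indicator {0..} t * t powr (z - 1) / exp (c * t)) \<partial>lborel)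
         = ennreal (Gamma z * c powr (- z))"
proof -
  let ?I = "\<integral>\<^sup>+x. ennreal (indicator {0..} x * x powr (z - 1) / exp (c * x)) \<partial>lborel"
  have "ennreal (Gamma z) = (\<integral>\<^sup>+t. ennreal (indicator {0..} t * t powr (z - 1) / exp t) \<partial>lborel)"
    using Gamma_conv_nn_integral_real[OF z] .
  also have "\<dots> = ennreal \<bar>c\<bar> * (\<integral>\<^sup>+x. ennreal (indicator {0..} (0 + c * x) * (0 + c * x) powr (z - 1)
                                            / exp (0 + c * x)) \<partial>lborel)"
    by (rule nn_integral_real_affine) (use c in auto)
  also have "\<dots> = (\<integral>\<^sup>+x. ennreal (c powr z) * ennreal (indicator {0..} x * x powr (z - 1) / exp (c * x)) \<partial>lborel)"
    using c
    by (subst nn_integral_cmult[symmetric], simp, intro nn_integral_cong)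
       (auto simp: indicator_def ennreal_mult'[symmetric] powr_mult zero_le_mult_iff powr_diff)
  also have "\<dots> = ennreal (c powr z) * ?I"
    by (rule nn_integral_cmult) simp
  finally have *: "ennreal (Gamma z) = ennreal (c powr z) * ?I" .
  have "ennreal (Gamma z * c powr (- z)) = ennreal (c powr (-z)) * ennreal (Gamma z)"
    using c z by (simp add: ennreal_mult'[symmetric] Gamma_real_pos less_imp_le mult.commute)
  also have "\<dots> = ennreal (c powr (-z) * c powr z) * ?I"
    by (subst *) (simp add: ennreal_mult'[symmetric] mult.assoc[symmetric])
  also have "c powr (-z) * c powr z = 1"
    using c by (simp add: powr_minus)
  finally show ?thesis by simp
qed

lemma Gamma_mult_nn_integral_Beta_second_kind:
  fixes a b :: real
  assumes a: "a > 0" and ab: "a < b"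
  shows "ennreal (Gamma b) * (\<integral>\<^sup>+v. ennreal (indicator {0..} v * v powr (a - 1) / (1 + v) powr b) \<partial>lborel)
         = ennreal (Gamma a * Gamma (b - a))"
proof -
  let ?I = "\<integral>\<^sup>+v. ennreal (indicator {0..} v * v powr (a - 1) / (1 + v) powr b) \<partial>lborel"
  have b: "b > 0" and gb: "Gamma b > 0"
    using a ab by (auto intro: Gamma_real_pos)
  define G where "G = (\<lambda>v s::real. ennreal (indicator {0..} v * v powr (a - 1) *
        (indicator {0..} s * s powr (b - 1) / exp ((1 + v) * s))))"
  have G_meas[measurable]: "case_prod G \<in> borel_measurable (lborel \<Otimes>\<^sub>M lborel)"
    unfolding G_def by measurable
  have inner_s: "ennreal (Gamma b) * ennreal (indicator {0..} v * v powr (a - 1) / (1 + v) powr b)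
      = (\<integral>\<^sup>+s. G v s \<partial>lborel)" for v
  proof (cases "v \<ge> 0")
    case True
    have "(\<integral>\<^sup>+s. G v s \<partial>lborel) = (\<integral>\<^sup>+s. ennreal (v powr (a - 1)) *
        ennreal (indicator {0..} s * s powr (b - 1) / exp ((1 + v) * s)) \<partial>lborel)"
      unfolding G_def using True
      by (intro nn_integral_cong) (simp add: ennreal_mult'[symmetric])
    also have "\<dots> = ennreal (v powr (a - 1)) * ennreal (Gamma b * (1 + v) powr (- b))"
      using True b by (subst nn_integral_cmult) (simp_all add: nn_integral_Gamma_scaled)
    finally show ?thesis
      using True gb by (simp add: ennreal_mult'[symmetric] powr_minus divide_inverse mult_ac)
  qed (simp add: G_def)
  have inner_v: "(\<integral>\<^sup>+v. G v s \<partial>lborel) = ennreal (Gamma a * (indicator {0..} s * s powr (b - a - 1) / exp s))"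
    if s: "s \<noteq> 0" for s
  proof (cases "s > 0")
    case True
    have "(\<integral>\<^sup>+v. G v s \<partial>lborel) = (\<integral>\<^sup>+v. ennreal (s powr (b - 1) / exp s) *
        ennreal (indicator {0..} v * v powr (a - 1) / exp (s * v)) \<partial>lborel)"
      unfolding G_def using True
      by (intro nn_integral_cong)
         (simp add: ennreal_mult'[symmetric] exp_add[symmetric] algebra_simps indicator_def)
    also have "\<dots> = ennreal (s powr (b - 1) / exp s) * ennreal (Gamma a * s powr (- a))"
      using True a by (subst nn_integral_cmult) (simp_all add: nn_integral_Gamma_scaled)
    finally show ?thesis
      using True a
      by (simp add: ennreal_mult'[symmetric] Gamma_real_pos less_imp_le powr_minus powr_diff
          divide_inverse mult_ac powr_add)
  qed (use s in \<open>simp add: G_def\<close>)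
  have "ennreal (Gamma b) * ?I = (\<integral>\<^sup>+v. \<integral>\<^sup>+s. G v s \<partial>lborel \<partial>lborel)"
    by (subst nn_integral_cmult[symmetric]) (simp_all add: inner_s)
  also have "\<dots> = (\<integral>\<^sup>+s. \<integral>\<^sup>+v. G v s \<partial>lborel \<partial>lborel)"
    by (rule lborel_pair.Fubini'[symmetric]) simp
  also have "\<dots> = (\<integral>\<^sup>+s. ennreal (Gamma a * (indicator {0..} s * s powr (b - a - 1) / exp s)) \<partial>lborel)"
    by (intro nn_integral_cong_AE eventually_mono[OF AE_lborel_singleton[of 0]]) (simp add: inner_v)
  also have "\<dots> = ennreal (Gamma a) * (\<integral>\<^sup>+s. ennreal (indicator {0..} s * s powr (b - a - 1) / exp s) \<partial>lborel)"
    using a by (subst nn_integral_cmult[symmetric])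
      (simp_all add: ennreal_mult'[symmetric] Gamma_real_pos less_imp_le)
  also have "\<dots> = ennreal (Gamma a * Gamma (b - a))"
    using a ab by (simp add: Gamma_conv_nn_integral_real[symmetric] ennreal_mult'[symmetric]
        Gamma_real_pos less_imp_le)
  finally show ?thesis .
qed

lemma nn_integral_Beta_second_kind:
  fixes a b :: real
  assumes a: "a > 0" and ab: "a < b"
  shows "(\<integral>\<^sup>+v. ennreal (indicator {0..} v * v powr (a - 1) / (1 + v) powr b) \<partial>lborel)
         = ennreal (Gamma a * Gamma (b - a) / Gamma b)"
proof -
  let ?I = "\<integral>\<^sup>+v. ennreal (indicator {0..} v * v powr (a - 1) / (1 + v) powr b) \<partial>lborel"
  have gb: "Gamma b > 0"
    using a ab by (auto intro: Gamma_real_pos)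
  have "?I = ennreal (1 / Gamma b) * (ennreal (Gamma b) * ?I)"
    using gb by (simp add: mult.assoc[symmetric] ennreal_mult'[symmetric])
  also have "\<dots> = ennreal (Gamma a * Gamma (b - a) / Gamma b)"
    unfolding Gamma_mult_nn_integral_Beta_second_kind[OF a ab]
    using a ab gb by (simp add: ennreal_mult'[symmetric] Gamma_real_pos less_imp_le)
  finally show ?thesis .
qed

lemma nn_integral_Ici_eq_SUP:
  fixes F :: "real \<Rightarrow> ennreal" and c :: "nat \<Rightarrow> real"
  assumes F[measurable]: "F \<in> borel_measurable borel"
    and c: "incseq c" "filterlim c at_top sequentially"
  shows "(\<integral>\<^sup>+x. F x * indicator {0..} x \<partial>lborel) = (SUP N. \<integral>\<^sup>+x. F x * indicator {0..c N} x \<partial>lborel)"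
proof -
  have "F x * indicator {0..} x = (SUP N. F x * indicator {0..c N} x)" for x
  proof (cases "x \<ge> 0")
    case True
    from c(2) obtain N where N: "c N \<ge> x"
      by (auto simp: filterlim_at_top eventually_sequentially)
    show ?thesis
    proof (rule antisym)
      show "F x * indicator {0..} x \<le> (SUP N. F x * indicator {0..c N} x)"
        by (rule SUP_upper2[of N]) (use True N in auto)
    qed (auto intro: SUP_least simp: indicator_def)
  qed simp
  then have "(\<integral>\<^sup>+x. F x * indicator {0..} x \<partial>lborel) = (\<integral>\<^sup>+x. (SUP N. F x * indicator {0..c N} x) \<partial>lborel)"
    by simp
  also have "\<dots> = (SUP N. \<integral>\<^sup>+x. F x * indicator {0..c N} x \<partial>lborel)"
  proof (rule nn_integral_monotone_convergence_SUP)
    show "incseq (\<lambda>N x. F x * indicator {0..c N} x)"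
      using c(1) by (auto simp: incseq_def le_fun_def indicator_def intro!: mult_left_mono)
        (meson order_trans)
  qed simp
  finally show ?thesis .
qed

lemma nn_integral_Ici_power_substitution:
  fixes h :: "real \<Rightarrow> real" and m :: nat
  assumes m: "m \<ge> 1" and h[measurable]: "h \<in> borel_measurable borel"
  shows "(\<integral>\<^sup>+v. ennreal (h v) * indicator {0..} v \<partial>lborel)
       = (\<integral>\<^sup>+u. ennreal (h (u ^ m) * (real m * u ^ (m - 1))) * indicator {0..} u \<partial>lborel)"
proof -
  have truncated: "(\<integral>\<^sup>+v. ennreal (h v) * indicator {0..real N ^ m} v \<partial>lborel)
       = (\<integral>\<^sup>+u. ennreal (h (u ^ m) * (real m * u ^ (m - 1))) * indicator {0..real N} u \<partial>lborel)"
    for N :: nat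
  proof -
    have "(\<integral>\<^sup>+v. ennreal (h v) * indicator {0..real N ^ m} v \<partial>lborel)
        = (\<integral>\<^sup>+v. ennreal (h v * indicator {(\<lambda>u. u ^ m) 0..(\<lambda>u. u ^ m) (real N)} v) \<partial>lborel)"
      using m by (intro nn_integral_cong) (auto simp: indicator_def power_0_left)
    also have "\<dots> = (\<integral>\<^sup>+u. ennreal (h (u ^ m) * (real m * u ^ (m - 1)) * indicator {0..real N} u) \<partial>lborel)"
    proof (rule nn_integral_substitution)
      show "((\<lambda>u. u ^ m) has_real_derivative real m * x ^ (m - 1)) (at x)" for x :: real
        by (rule derivative_eq_intros refl | simp)+
    qed (auto simp: set_borel_measurable_def intro!: continuous_intros)
    also have "\<dots> = (\<integral>\<^sup>+u. ennreal (h (u ^ m) * (real m * u ^ (m - 1))) * indicator {0..real N} u \<partial>lborel)"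
      by (intro nn_integral_cong) (auto simp: indicator_def)
    finally show ?thesis .
  qed
  have inc_pow: "incseq (\<lambda>N::nat. real N ^ m)"
    by (auto simp: incseq_def intro!: power_mono)
  have lim_pow: "filterlim (\<lambda>N::nat. real N ^ m) at_top sequentially"
    using m by (intro filterlim_pow_at_top filterlim_real_sequentially) auto
  have inc: "incseq (\<lambda>N::nat. real N)"
    by (auto simp: incseq_def)
  show ?thesis
    by (subst nn_integral_Ici_eq_SUP[OF _ inc_pow lim_pow], simp)
       (subst nn_integral_Ici_eq_SUP[OF _ inc filterlim_real_sequentially], simp_all add: truncated)
qed

lemma
  fixes \<phi> :: "real \<Rightarrow> real"
  assumes \<phi>: "integrable lborel \<phi>"
  shows integrable_Ici_reflect: "integrable lborel (\<lambda>y. indicator {0..} y * (\<phi> y + \<phi> (- y)))"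
    and integral_eq_integral_Ici_reflect:
      "(\<integral>y. \<phi> y \<partial>lborel) = (\<integral>y. indicator {0..} y * (\<phi> y + \<phi> (- y)) \<partial>lborel)"
proof -
  have [measurable]: "\<phi> \<in> borel_measurable borel"
    using \<phi> by auto
  have "integrable lborel (\<lambda>y. \<phi> (0 + (-1) * y))"
    by (rule lborel_integrable_real_affine[OF \<phi>]) simp
  then have i1: "integrable lborel (\<lambda>y. indicator {0..} y * \<phi> y)"
    and i2: "integrable lborel (\<lambda>y. indicator {..<0} y * \<phi> y)"
    and i3: "integrable lborel (\<lambda>y. indicator {0..} y * \<phi> (- y))"
    using integrable_mult_indicator[OF _ \<phi>] integrable_mult_indicator[of _ lborel "\<lambda>y. \<phi> (- y)"]
    by simp_all
  show "integrable lborel (\<lambda>y. indicator {0..} y * (\<phi> y + \<phi> (- y)))"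
    using Bochner_Integration.integrable_add[OF i1 i3] by (simp add: distrib_left)
  have "(\<integral>y. \<phi> y \<partial>lborel) = (\<integral>y. indicator {0..} y * \<phi> y + indicator {..<0} y * \<phi> y \<partial>lborel)"
    by (rule arg_cong[where f="integral\<^sup>L lborel"]) (auto simp: fun_eq_iff indicator_def)
  also have "\<dots> = (\<integral>y. indicator {0..} y * \<phi> y \<partial>lborel) + (\<integral>y. indicator {..<0} y * \<phi> y \<partial>lborel)"
    by (rule Bochner_Integration.integral_add[OF i1 i2])
  also have "(\<integral>y. indicator {..<0} y * \<phi> y \<partial>lborel)
      = \<bar>-1\<bar> *\<^sub>R (\<integral>y. indicator {..<0} (0 + (-1) * y) * \<phi> (0 + (-1) * y) \<partial>lborel)"
    by (rule lborel_integral_real_affine) simp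
  also have "\<dots> = (\<integral>y. indicator {0..} y * \<phi> (- y) \<partial>lborel)"
    by (simp, intro integral_cong_AE eventually_mono[OF AE_lborel_singleton[of 0]])
       (auto simp: indicator_def)
  also have "(\<integral>y. indicator {0..} y * \<phi> y \<partial>lborel) + \<dots>
      = (\<integral>y. indicator {0..} y * (\<phi> y + \<phi> (- y)) \<partial>lborel)"
    using Bochner_Integration.integral_add[OF i1 i3] by (simp add: distrib_left)
  finally show "(\<integral>y. \<phi> y \<partial>lborel) = (\<integral>y. indicator {0..} y * (\<phi> y + \<phi> (- y)) \<partial>lborel)" .
qed

section \<open>The kernel and its moments\<close>

definition kern :: "nat \<Rightarrow> real \<Rightarrow> real \<Rightarrow> real \<Rightarrow> real" where
  "kern \<alpha> \<beta> \<xi> y = 1 / (y ^ (2 * \<alpha>) + \<xi> ^ (2 * \<alpha>)) powr \<beta>"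

lemma Mxi_kern: "Mxi \<alpha> \<beta> \<xi> f x = Wconst \<alpha> \<beta> \<xi> * (\<integral>y. f (x + y) * kern \<alpha> \<beta> \<xi> y \<partial>lborel)"
  unfolding Mxi_def kern_def ..

lemma kern_measurable[measurable]: "kern \<alpha> \<beta> \<xi> \<in> borel_measurable borel"
  unfolding kern_def by measurable

lemma kern_base_pos:
  fixes y \<xi> :: real
  assumes "\<xi> > 0"
  shows "y ^ (2 * \<alpha>) + \<xi> ^ (2 * \<alpha>) > 0"
  using assms by (intro add_nonneg_pos) (simp_all add: power_mult)

lemma kern_eq_powr:
  assumes "\<xi> > 0"
  shows "kern \<alpha> \<beta> \<xi> y = (y ^ (2 * \<alpha>) + \<xi> ^ (2 * \<alpha>)) powr (- \<beta>)"
  using kern_base_pos[OF assms, of y \<alpha>] unfolding kern_def by (simp add: powr_minus divide_inverse)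

lemma kern_pos: "\<xi> > 0 \<Longrightarrow> kern \<alpha> \<beta> \<xi> y > 0"
  using kern_base_pos[of \<xi> y \<alpha>] by (simp add: kern_eq_powr)

lemma kern_minus: "kern \<alpha> \<beta> \<xi> (- y) = kern \<alpha> \<beta> \<xi> y"
  unfolding kern_def by (simp add: power_mult)

lemma kern_scale:
  assumes \<xi>: "\<xi> > 0"
  shows "kern \<alpha> \<beta> \<xi> (\<xi> * u) = \<xi> powr (- 2 * real \<alpha> * \<beta>) * kern \<alpha> \<beta> 1 u"
proof -
  have "(\<xi> * u) ^ (2 * \<alpha>) + \<xi> ^ (2 * \<alpha>) = \<xi> ^ (2 * \<alpha>) * (u ^ (2 * \<alpha>) + 1 ^ (2 * \<alpha>))"
    by (simp add: power_mult_distrib algebra_simps)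
  moreover have "(\<xi> ^ (2 * \<alpha>)) powr (- \<beta>) = \<xi> powr (- 2 * real \<alpha> * \<beta>)"
    using \<xi> by (simp add: powr_realpow[symmetric] powr_powr)
  ultimately show ?thesis
    using \<xi> kern_base_pos[of 1 u \<alpha>] by (simp add: kern_eq_powr powr_mult)
qed

lemma nn_integral_kern_moment_unit:
  fixes j :: nat
  assumes \<alpha>: "\<alpha> \<ge> 1" and jb: "real j + 1 < 2 * real \<alpha> * \<beta>"
  defines "A \<equiv> (real j + 1) / (2 * real \<alpha>)"
  shows "(\<integral>\<^sup>+u. ennreal (u ^ j * kern \<alpha> \<beta> 1 u) * indicator {0..} u \<partial>lborel)
         = ennreal (Gamma A * Gamma (\<beta> - A) / (2 * real \<alpha> * Gamma \<beta>))"
proof -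
  have A0: "A > 0" and A\<beta>: "A < \<beta>"
    using \<alpha> jb by (simp_all add: A_def field_simps)
  define h where "h = (\<lambda>v::real. v powr (A - 1) / (1 + v) powr \<beta>)"
  have kern1: "kern \<alpha> \<beta> 1 u = (u ^ (2 * \<alpha>) + 1) powr (- \<beta>)" for u
    by (simp add: kern_eq_powr)
  have "ennreal (u ^ j * kern \<alpha> \<beta> 1 u) * indicator {0..} u
      = ennreal (1 / (2 * real \<alpha>)) *
        (ennreal (h (u ^ (2 * \<alpha>)) * (real (2 * \<alpha>) * u ^ (2 * \<alpha> - 1))) * indicator {0..} u)"
    if "u \<noteq> 0" for u
  proof (cases "u > 0")
    case True
    have "h (u ^ (2 * \<alpha>)) * (real (2 * \<alpha>) * u ^ (2 * \<alpha> - 1))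
        = 2 * real \<alpha> * (u powr (2 * real \<alpha> * (A - 1)) * u powr (2 * real \<alpha> - 1)) * kern \<alpha> \<beta> 1 u"
      using True \<alpha> unfolding h_def kern1
      by (simp add: powr_realpow[symmetric] powr_powr powr_minus divide_inverse add.commute of_nat_diff)
    also have "u powr (2 * real \<alpha> * (A - 1)) * u powr (2 * real \<alpha> - 1) = u ^ j"
      using True \<alpha> by (simp add: powr_add[symmetric] A_def field_simps powr_realpow[symmetric])
    finally show ?thesis
      using True \<alpha> kern_pos[of 1 \<alpha> \<beta> u]
      by (simp add: ennreal_mult'[symmetric] zero_le_mult_iff)
  qed (use that in simp)
  then have "(\<integral>\<^sup>+u. ennreal (u ^ j * kern \<alpha> \<beta> 1 u) * indicator {0..} u \<partial>lborel)
      = (\<integral>\<^sup>+u. ennreal (1 / (2 * real \<alpha>)) *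
           (ennreal (h (u ^ (2 * \<alpha>)) * (real (2 * \<alpha>) * u ^ (2 * \<alpha> - 1))) * indicator {0..} u) \<partial>lborel)"
    by (intro nn_integral_cong_AE eventually_mono[OF AE_lborel_singleton[of 0]]) auto
  also have "\<dots> = ennreal (1 / (2 * real \<alpha>)) *
      (\<integral>\<^sup>+u. ennreal (h (u ^ (2 * \<alpha>)) * (real (2 * \<alpha>) * u ^ (2 * \<alpha> - 1))) * indicator {0..} u \<partial>lborel)"
    by (rule nn_integral_cmult) (simp add: h_def)
  also have "(\<integral>\<^sup>+u. ennreal (h (u ^ (2 * \<alpha>)) * (real (2 * \<alpha>) * u ^ (2 * \<alpha> - 1))) * indicator {0..} u \<partial>lborel)
      = (\<integral>\<^sup>+v. ennreal (h v) * indicator {0..} v \<partial>lborel)"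
    by (rule nn_integral_Ici_power_substitution[symmetric]) (use \<alpha> in \<open>auto simp: h_def\<close>)
  also have "\<dots> = ennreal (Gamma A * Gamma (\<beta> - A) / Gamma \<beta>)"
    by (subst nn_integral_Beta_second_kind[OF A0 A\<beta>, symmetric])
       (auto intro!: nn_integral_cong simp: h_def indicator_def)
  finally show ?thesis
    using \<alpha> A0 A\<beta> by (simp add: ennreal_mult'[symmetric] Gamma_real_pos less_imp_le)
qed

lemma nn_integral_kern_moment:
  fixes j :: nat
  assumes \<alpha>: "\<alpha> \<ge> 1" and \<xi>: "\<xi> > 0" and jb: "real j + 1 < 2 * real \<alpha> * \<beta>"
  defines "A \<equiv> (real j + 1) / (2 * real \<alpha>)"
  shows "(\<integral>\<^sup>+y. ennreal (y ^ j * kern \<alpha> \<beta> \<xi> y) * indicator {0..} y \<partial>lborel)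
         = ennreal (\<xi> powr (real j + 1 - 2 * real \<alpha> * \<beta>) * (Gamma A * Gamma (\<beta> - A) / (2 * real \<alpha> * Gamma \<beta>)))"
proof -
  let ?c = "\<xi> powr (real j - 2 * real \<alpha> * \<beta>)"
  have "ennreal ((\<xi> * u) ^ j * kern \<alpha> \<beta> \<xi> (\<xi> * u)) * indicator {0..} (\<xi> * u)
      = ennreal ?c * (ennreal (u ^ j * kern \<alpha> \<beta> 1 u) * indicator {0..} u)" for u
  proof (cases "u \<ge> 0")
    case True
    have "(\<xi> * u) ^ j * kern \<alpha> \<beta> \<xi> (\<xi> * u) = ?c * (u ^ j * kern \<alpha> \<beta> 1 u)"
      using \<xi> by (simp add: kern_scale power_mult_distrib powr_diff powr_realpow[symmetric]
          powr_minus divide_inverse mult_ac)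
    then show ?thesis
      using True \<xi> kern_pos[of 1 \<alpha> \<beta> u] by (simp add: ennreal_mult'[symmetric] zero_le_mult_iff)
  qed (use \<xi> in \<open>simp add: indicator_def zero_le_mult_iff\<close>)
  then have "(\<integral>\<^sup>+y. ennreal (y ^ j * kern \<alpha> \<beta> \<xi> y) * indicator {0..} y \<partial>lborel)
      = ennreal \<xi> * (\<integral>\<^sup>+u. ennreal ?c * (ennreal (u ^ j * kern \<alpha> \<beta> 1 u) * indicator {0..} u) \<partial>lborel)"
    using nn_integral_real_affine[of "\<lambda>y. ennreal (y ^ j * kern \<alpha> \<beta> \<xi> y) * indicator {0..} y" \<xi> 0] \<xi>
    by simp
  also have "\<dots> = ennreal (\<xi> * ?c) * (\<integral>\<^sup>+u. ennreal (u ^ j * kern \<alpha> \<beta> 1 u) * indicator {0..} u \<partial>lborel)"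
    using \<xi> by (subst nn_integral_cmult) (auto simp: ennreal_mult'[symmetric] mult.assoc[symmetric])
  also have "\<xi> * ?c = \<xi> powr (real j + 1 - 2 * real \<alpha> * \<beta>)"
    using \<xi> by (subst powr_mult_base) (simp_all add: algebra_simps)
  finally show ?thesis
    using \<xi> \<alpha> jb by (simp add: nn_integral_kern_moment_unit A_def ennreal_mult'[symmetric] del: ennreal_mult)
qed

lemma
  fixes j :: nat
  assumes \<alpha>: "\<alpha> \<ge> 1" and \<xi>: "\<xi> > 0" and jb: "real j + 1 < 2 * real \<alpha> * \<beta>"
  defines "A \<equiv> (real j + 1) / (2 * real \<alpha>)"
  shows integrable_kern_moment: "integrable lborel (\<lambda>y. indicator {0..} y * (y ^ j * kern \<alpha> \<beta> \<xi> y))"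
    and kern_moment_integral: "(\<integral>y. indicator {0..} y * (y ^ j * kern \<alpha> \<beta> \<xi> y) \<partial>lborel)
          = \<xi> powr (real j + 1 - 2 * real \<alpha> * \<beta>) * (Gamma A * Gamma (\<beta> - A) / (2 * real \<alpha> * Gamma \<beta>))"
proof -
  have A0: "A > 0" and A\<beta>: "A < \<beta>"
    using \<alpha> jb by (simp_all add: A_def field_simps)
  have nonneg: "0 \<le> indicator {0..} y * (y ^ j * kern \<alpha> \<beta> \<xi> y)" for y :: real
    using kern_pos[OF \<xi>] by (auto simp: indicator_def less_imp_le)
  have eq: "(\<integral>\<^sup>+y. ennreal (indicator {0..} y * (y ^ j * kern \<alpha> \<beta> \<xi> y)) \<partial>lborel)
      = ennreal (\<xi> powr (real j + 1 - 2 * real \<alpha> * \<beta>) * (Gamma A * Gamma (\<beta> - A) / (2 * real \<alpha> * Gamma \<beta>)))"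
    unfolding A_def nn_integral_kern_moment[OF assms(1-3), symmetric]
    by (intro nn_integral_cong) (auto simp: indicator_def)
  show int: "integrable lborel (\<lambda>y. indicator {0..} y * (y ^ j * kern \<alpha> \<beta> \<xi> y))"
    using eq nonneg by (intro integrableI_nonneg) auto
  have "ennreal (\<integral>y. indicator {0..} y * (y ^ j * kern \<alpha> \<beta> \<xi> y) \<partial>lborel)
      = ennreal (\<xi> powr (real j + 1 - 2 * real \<alpha> * \<beta>) * (Gamma A * Gamma (\<beta> - A) / (2 * real \<alpha> * Gamma \<beta>)))"
    using nn_integral_eq_integral[OF int] nonneg eq by simp
  then show "(\<integral>y. indicator {0..} y * (y ^ j * kern \<alpha> \<beta> \<xi> y) \<partial>lborel)
      = \<xi> powr (real j + 1 - 2 * real \<alpha> * \<beta>) * (Gamma A * Gamma (\<beta> - A) / (2 * real \<alpha> * Gamma \<beta>))"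
    using A0 A\<beta> \<alpha> nonneg
    by (subst (asm) ennreal_inj) (auto intro!: integral_nonneg_AE Gamma_real_pos less_imp_le)
qed

definition kern_coeff :: "nat \<Rightarrow> real \<Rightarrow> nat \<Rightarrow> real" where
  "kern_coeff \<alpha> \<beta> j = Gamma ((real j + 1) / (2 * real \<alpha>)) * Gamma (\<beta> - (real j + 1) / (2 * real \<alpha>))
     / (Gamma (1 / (2 * real \<alpha>)) * Gamma (\<beta> - 1 / (2 * real \<alpha>)))"

lemma kern_coeff_0:
  assumes "\<alpha> \<ge> 1" "\<beta> > 1 / (2 * real \<alpha>)"
  shows "kern_coeff \<alpha> \<beta> 0 = 1"
proof -
  have "Gamma (1 / (2 * real \<alpha>)) > 0" "Gamma (\<beta> - 1 / (2 * real \<alpha>)) > 0"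
    using assms by (auto intro!: Gamma_real_pos)
  then show ?thesis
    by (simp add: kern_coeff_def)
qed

lemma kern_coeff_nonneg:
  assumes "\<alpha> \<ge> 1" "real j + 1 < 2 * real \<alpha> * \<beta>"
  shows "kern_coeff \<alpha> \<beta> j \<ge> 0"
proof -
  have "1 / (2 * real \<alpha>) \<le> (real j + 1) / (2 * real \<alpha>)" "(real j + 1) / (2 * real \<alpha>) < \<beta>"
    using assms by (simp_all add: divide_right_mono field_simps)
  then have "Gamma (1 / (2 * real \<alpha>)) > 0" "Gamma (\<beta> - 1 / (2 * real \<alpha>)) > 0"
       "Gamma ((real j + 1) / (2 * real \<alpha>)) > 0" "Gamma (\<beta> - (real j + 1) / (2 * real \<alpha>)) > 0"
    using assms by (auto intro!: Gamma_real_pos)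
  then show ?thesis
    unfolding kern_coeff_def by simp
qed

lemma Wconst_pos:
  assumes "\<alpha> \<ge> 1" "\<beta> > 1 / (2 * real \<alpha>)" "\<xi> > 0"
  shows "Wconst \<alpha> \<beta> \<xi> > 0"
proof -
  have "Gamma (1 / (2 * real \<alpha>)) > 0" "Gamma (\<beta> - 1 / (2 * real \<alpha>)) > 0" "Gamma \<beta> > 0"
    using assms by (auto intro!: Gamma_real_pos simp: order_less_trans[of 0 "1 / (2 * real \<alpha>)" \<beta>])
  then show ?thesis
    unfolding Wconst_def using assms by simp
qed

lemma Wconst_kern_moment:
  fixes j :: nat
  assumes \<alpha>: "\<alpha> \<ge> 1" and \<xi>: "\<xi> > 0" and jb: "real j + 1 < 2 * real \<alpha> * \<beta>"
  shows "Wconst \<alpha> \<beta> \<xi> * (\<integral>y. indicator {0..} y * (y ^ j * kern \<alpha> \<beta> \<xi> y) \<partial>lborel)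
         = kern_coeff \<alpha> \<beta> j * \<xi> ^ j / 2"
proof -
  define A where "A = (real j + 1) / (2 * real \<alpha>)"
  define D where "D = Gamma (1 / (2 * real \<alpha>)) * Gamma (\<beta> - 1 / (2 * real \<alpha>))"
  have "0 < real \<alpha> * \<beta>"
    using jb by linarith
  then have "\<beta> > 0"
    using \<alpha> by (simp add: zero_less_mult_iff)
  then have "Gamma \<beta> > 0"
    by (rule Gamma_real_pos)
  then have "Wconst \<alpha> \<beta> \<xi> * (\<integral>y. indicator {0..} y * (y ^ j * kern \<alpha> \<beta> \<xi> y) \<partial>lborel)
      = (\<xi> powr (2 * real \<alpha> * \<beta> - 1) * \<xi> powr (real j + 1 - 2 * real \<alpha> * \<beta>))
        * (Gamma A * Gamma (\<beta> - A) / D) / 2"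
    using \<alpha> unfolding kern_moment_integral[OF assms] Wconst_def A_def[symmetric] D_def[symmetric]
    by (simp add: field_simps)
  also have "\<xi> powr (2 * real \<alpha> * \<beta> - 1) * \<xi> powr (real j + 1 - 2 * real \<alpha> * \<beta>) = \<xi> ^ j"
    using \<xi> by (simp add: powr_add[symmetric] powr_realpow)
  finally show ?thesis
    unfolding kern_coeff_def A_def D_def by simp
qed

lemma integrable_abs_kern_moment:
  fixes j :: nat
  assumes \<alpha>: "\<alpha> \<ge> 1" and \<xi>: "\<xi> > 0" and jb: "real j + 1 < 2 * real \<alpha> * \<beta>"
  shows "integrable lborel (\<lambda>y. \<bar>y\<bar> ^ j * kern \<alpha> \<beta> \<xi> y)"
proof -
  let ?h = "\<lambda>y. indicator {0..} y * (y ^ j * kern \<alpha> \<beta> \<xi> y)"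
  have h: "integrable lborel ?h"
    by (rule integrable_kern_moment[OF assms])
  have "integrable lborel (\<lambda>y. ?h (0 + (-1) * y))"
    by (rule lborel_integrable_real_affine[OF h]) simp
  with h have "integrable lborel (\<lambda>y. ?h y + ?h (0 + (-1) * y))"
    by (rule Bochner_Integration.integrable_add)
  then show ?thesis
  proof (rule Bochner_Integration.integrable_bound)
    show "AE y in lborel. norm (\<bar>y\<bar> ^ j * kern \<alpha> \<beta> \<xi> y) \<le> norm (?h y + ?h (0 + (-1) * y))"
    proof (intro AE_I2)
      fix y :: real
      show "norm (\<bar>y\<bar> ^ j * kern \<alpha> \<beta> \<xi> y) \<le> norm (?h y + ?h (0 + (-1) * y))"
        using kern_pos[OF \<xi>, of \<alpha> \<beta> y] kern_minus[of \<alpha> \<beta> \<xi> y]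
        by (cases "y \<ge> 0") (auto simp: indicator_def abs_mult)
    qed
  qed measurable
qed

section \<open>The symmetric Taylor remainder\<close>

lemma nderiv_0 [simp]: "nderiv 0 f = f"
  by (simp add: nderiv_def)

lemma nderiv_Suc: "nderiv (Suc k) f = deriv (nderiv k f)"
  by (simp add: nderiv_def)

lemma Cn_has_real_derivative:
  assumes "Cn n f" "k < n"
  shows "(nderiv k f has_real_derivative nderiv (Suc k) f x) (at x)"
proof -
  have "nderiv k f differentiable (at x)"
    using assms unfolding Cn_def by (auto simp: differentiable_on_def)
  then show ?thesis
    unfolding nderiv_Suc by (simp add: DERIV_deriv_iff_real_differentiable)
qed

lemma Cn_continuous_on:
  assumes "Cn n f" "k \<le> n"
  shows "continuous_on UNIV (nderiv k f)"
proof (cases "k = n")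
  case False
  with assms have "nderiv k f differentiable_on UNIV"
    unfolding Cn_def by auto
  then show ?thesis
    by (rule differentiable_imp_continuous_on)
qed (use assms in \<open>simp add: Cn_def\<close>)

lemma Taylor_has_integral_signed:
  fixes \<sigma> y x :: real
  assumes Cn: "Cn n f" and n: "n > 0" and y: "y \<ge> 0" and \<sigma>: "\<sigma> = 1 \<or> \<sigma> = -1"
  shows "((\<lambda>t. (y - t) ^ (n - 1) / fact (n - 1) * (\<sigma> ^ n * nderiv n f (x + \<sigma> * t)))
     has_integral f (x + \<sigma> * y) - (\<Sum>i<n. y ^ i / fact i * (\<sigma> ^ i * nderiv i f x))) {0..y}"
proof -
  define Df where "Df = (\<lambda>m t. \<sigma> ^ m * nderiv m f (x + \<sigma> * t))"
  have "((\<lambda>t. ((y - t) ^ (n - 1) / fact (n - 1)) *\<^sub>R Df n t) has_integral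
        Df 0 y - (\<Sum>i<n. ((y - 0) ^ i / fact i) *\<^sub>R Df i 0)) {0..y}"
  proof (rule Taylor_has_integral[OF n])
    fix m t assume m: "m < n"
    have "((\<lambda>t. x + \<sigma> * t) has_real_derivative \<sigma>) (at t)"
      by (auto intro!: derivative_eq_intros)
    from DERIV_chain2[OF Cn_has_real_derivative[OF Cn m] this]
    have "((\<lambda>t. \<sigma> ^ m * nderiv m f (x + \<sigma> * t)) has_real_derivative
           \<sigma> ^ m * (nderiv (Suc m) f (x + \<sigma> * t) * \<sigma>)) (at t)"
      by (intro DERIV_cmult) simp
    then have "(Df m has_real_derivative Df (Suc m) t) (at t)"
      unfolding Df_def by (simp add: mult_ac)
    then show "(Df m has_vector_derivative Df (Suc m) t) (at t within {0..y})"
      by (simp add: has_real_derivative_iff_has_vector_derivative has_vector_derivative_at_within)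
  qed (use y in auto)
  then show ?thesis
    unfolding Df_def by (simp add: mult_ac)
qed

lemma has_integral_Taylor_weight:
  fixes y :: real
  assumes n: "n > 0" and y: "y \<ge> 0"
  shows "((\<lambda>t. (y - t) ^ (n - 1) / fact (n - 1)) has_integral y ^ n / fact n) {0..y}"
proof -
  define F where "F = (\<lambda>t::real. - ((y - t) ^ n) / fact n)"
  have "((\<lambda>t. (y - t) ^ (n - 1) / fact (n - 1)) has_integral (F y - F 0)) {0..y}"
  proof (rule fundamental_theorem_of_calculus[OF y])
    fix t :: real
    have "(F has_real_derivative - (real n * (y - t) ^ (n - 1) * (0 - 1)) / fact n) (at t)"
      unfolding F_def by (auto intro!: derivative_eq_intros)
    also have "- (real n * (y - t) ^ (n - 1) * (0 - 1)) / fact n = (y - t) ^ (n - 1) / fact (n - 1)"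
      using n by (simp add: fact_reduce[of n])
    finally show "(F has_vector_derivative (y - t) ^ (n - 1) / fact (n - 1)) (at t within {0..y})"
      by (simp add: has_real_derivative_iff_has_vector_derivative has_vector_derivative_at_within)
  qed
  then show ?thesis
    using n by (simp add: F_def power_0_left)
qed

definition sym_diff :: "(real \<Rightarrow> real) \<Rightarrow> real \<Rightarrow> real \<Rightarrow> real" where
  "sym_diff g x t = g (x + t) + g (x - t) - 2 * g x"

text \<open>Subtracting also the Taylor term of order \<open>n\<close> makes the integral form of the remainder
  depend on \<open>nderiv n f\<close> only through \<open>sym_diff\<close>.\<close>

definition sym_rem :: "nat \<Rightarrow> (real \<Rightarrow> real) \<Rightarrow> real \<Rightarrow> real \<Rightarrow> real" where
  "sym_rem n f x y = f (x + y) + f (x - y) - 2 * nderiv n f x * y ^ n / fact n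
     - (\<Sum>i<n. y ^ i / fact i * ((1 + (-1) ^ i) * nderiv i f x))"

lemma sym_rem_has_integral:
  fixes y x :: real
  assumes Cn: "Cn n f" and n: "n > 0" "even n" and y: "y \<ge> 0"
  shows "((\<lambda>t. (y - t) ^ (n - 1) / fact (n - 1) * sym_diff (nderiv n f) x t) has_integral sym_rem n f x y) {0..y}"
proof -
  let ?w = "\<lambda>t. (y - t) ^ (n - 1) / fact (n - 1)"
  have "((\<lambda>t. ?w t * (1 ^ n * nderiv n f (x + 1 * t)) + ?w t * ((-1) ^ n * nderiv n f (x + (-1) * t))
          - ?w t * (2 * nderiv n f x)) has_integral
      (f (x + 1 * y) - (\<Sum>i<n. y ^ i / fact i * (1 ^ i * nderiv i f x)))
      + (f (x + (-1) * y) - (\<Sum>i<n. y ^ i / fact i * ((-1) ^ i * nderiv i f x)))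
      - y ^ n / fact n * (2 * nderiv n f x)) {0..y}"
    by (intro has_integral_diff has_integral_add Taylor_has_integral_signed[OF Cn n(1) y]
        has_integral_mult_left[OF has_integral_Taylor_weight[OF n(1) y]]) simp_all
  moreover have "(\<lambda>t. ?w t * (1 ^ n * nderiv n f (x + 1 * t)) + ?w t * ((-1) ^ n * nderiv n f (x + (-1) * t))
          - ?w t * (2 * nderiv n f x)) = (\<lambda>t. ?w t * sym_diff (nderiv n f) x t)"
    using n(2) by (auto simp: sym_diff_def fun_eq_iff field_simps)
  moreover have "(f (x + 1 * y) - (\<Sum>i<n. y ^ i / fact i * (1 ^ i * nderiv i f x)))
      + (f (x + (-1) * y) - (\<Sum>i<n. y ^ i / fact i * ((-1) ^ i * nderiv i f x)))
      - y ^ n / fact n * (2 * nderiv n f x) = sym_rem n f x y"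
    unfolding sym_rem_def by (simp add: algebra_simps sum.distrib[symmetric])
  ultimately show ?thesis
    by simp
qed

lemma has_integral_abs_le_nn_integral:
  fixes \<phi> :: "real \<Rightarrow> real"
  assumes I: "(\<phi> has_integral I) {a..b}" and c: "continuous_on {a..b} \<phi>"
  shows "ennreal \<bar>I\<bar> \<le> (\<integral>\<^sup>+t. ennreal \<bar>\<phi> t\<bar> * indicator {a..b} t \<partial>lborel)"
proof -
  have si: "set_integrable lborel {a..b} \<phi>"
    by (rule borel_integrable_atLeastAtMost'[OF c])
  have "(LINT x:{a..b}|lborel. \<phi> x) = I"
    using set_borel_integral_eq_integral(2)[OF si] integral_unique[OF I] by simp
  then have "ennreal \<bar>I\<bar> = ennreal (norm (integral\<^sup>L lborel (\<lambda>x. indicator {a..b} x *\<^sub>R \<phi> x)))"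
    by (simp add: set_lebesgue_integral_def)
  also have "\<dots> \<le> (\<integral>\<^sup>+x. norm (indicator {a..b} x *\<^sub>R \<phi> x) \<partial>lborel)"
    by (rule integral_norm_bound_ennreal) (use si in \<open>simp add: set_integrable_def\<close>)
  also have "\<dots> = (\<integral>\<^sup>+t. ennreal \<bar>\<phi> t\<bar> * indicator {a..b} t \<partial>lborel)"
    by (intro nn_integral_cong) (auto simp: indicator_def)
  finally show ?thesis .
qed

lemma sym_rem_abs_le:
  fixes x y :: real
  assumes Cn: "Cn n f" and n: "n > 0" "even n" and y: "y \<ge> 0"
  shows "ennreal \<bar>sym_rem n f x y\<bar> \<le> ennreal (y ^ (n - 1) / fact (n - 1)) *
          (\<integral>\<^sup>+t. ennreal \<bar>sym_diff (nderiv n f) x t\<bar> * indicator {0..y} t \<partial>lborel)"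
proof -
  have gc: "continuous_on UNIV (nderiv n f)"
    by (rule Cn_continuous_on[OF Cn le_refl])
  have [measurable]: "nderiv n f \<in> borel_measurable borel"
    by (rule borel_measurable_continuous_onI[OF gc])
  have "ennreal \<bar>sym_rem n f x y\<bar>
      \<le> (\<integral>\<^sup>+t. ennreal \<bar>(y - t) ^ (n - 1) / fact (n - 1) * sym_diff (nderiv n f) x t\<bar> * indicator {0..y} t \<partial>lborel)"
    by (rule has_integral_abs_le_nn_integral[OF sym_rem_has_integral[OF Cn n y]])
       (unfold sym_diff_def, intro continuous_intros continuous_on_compose2[OF gc], auto)
  also have "\<dots> \<le> (\<integral>\<^sup>+t. ennreal (y ^ (n - 1) / fact (n - 1)) *
                      (ennreal \<bar>sym_diff (nderiv n f) x t\<bar> * indicator {0..y} t) \<partial>lborel)"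
  proof (intro nn_integral_mono)
    fix t :: real
    have "\<bar>(y - t) ^ (n - 1) / fact (n - 1) * sym_diff (nderiv n f) x t\<bar>
        \<le> y ^ (n - 1) / fact (n - 1) * \<bar>sym_diff (nderiv n f) x t\<bar>" if "t \<in> {0..y}"
      using that by (auto simp: abs_mult intro!: mult_right_mono divide_right_mono power_mono)
    then show "ennreal \<bar>(y - t) ^ (n - 1) / fact (n - 1) * sym_diff (nderiv n f) x t\<bar> * indicator {0..y} t
        \<le> ennreal (y ^ (n - 1) / fact (n - 1)) * (ennreal \<bar>sym_diff (nderiv n f) x t\<bar> * indicator {0..y} t)"
      using y by (cases "t \<in> {0..y}") (simp_all add: ennreal_mult'[symmetric] ennreal_leI)
  qed
  also have "\<dots> = ennreal (y ^ (n - 1) / fact (n - 1)) *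
          (\<integral>\<^sup>+t. ennreal \<bar>sym_diff (nderiv n f) x t\<bar> * indicator {0..y} t \<partial>lborel)"
    by (intro nn_integral_cmult) (unfold sym_diff_def, measurable)
  finally show ?thesis .
qed

lemma Taylor_remainder_abs_le_L1norm:
  fixes x y \<sigma> :: real
  assumes Cn: "Cn n f" and n: "n > 0" and y: "y \<ge> 0" and \<sigma>: "\<sigma> = 1 \<or> \<sigma> = -1"
  shows "ennreal \<bar>f (x + \<sigma> * y) - (\<Sum>i<n. y ^ i / fact i * (\<sigma> ^ i * nderiv i f x))\<bar>
     \<le> ennreal (y ^ (n - 1) / fact (n - 1)) * L1norm (nderiv n f)"
proof -
  have gc: "continuous_on UNIV (nderiv n f)"
    by (rule Cn_continuous_on[OF Cn le_refl])
  have [measurable]: "nderiv n f \<in> borel_measurable borel"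
    by (rule borel_measurable_continuous_onI[OF gc])
  have \<sigma>1: "\<bar>\<sigma>\<bar> = 1"
    using \<sigma> by auto
  have "ennreal \<bar>f (x + \<sigma> * y) - (\<Sum>i<n. y ^ i / fact i * (\<sigma> ^ i * nderiv i f x))\<bar>
      \<le> (\<integral>\<^sup>+t. ennreal \<bar>(y - t) ^ (n - 1) / fact (n - 1) * (\<sigma> ^ n * nderiv n f (x + \<sigma> * t))\<bar>
                * indicator {0..y} t \<partial>lborel)"
    by (rule has_integral_abs_le_nn_integral[OF Taylor_has_integral_signed[OF Cn n y \<sigma>]])
       (intro continuous_intros continuous_on_compose2[OF gc], auto)
  also have "\<dots> \<le> (\<integral>\<^sup>+t. ennreal (y ^ (n - 1) / fact (n - 1)) * ennreal \<bar>nderiv n f (x + \<sigma> * t)\<bar> \<partial>lborel)"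
  proof (intro nn_integral_mono)
    fix t :: real
    have "\<bar>(y - t) ^ (n - 1) / fact (n - 1) * (\<sigma> ^ n * nderiv n f (x + \<sigma> * t))\<bar>
        \<le> y ^ (n - 1) / fact (n - 1) * \<bar>nderiv n f (x + \<sigma> * t)\<bar>" if "t \<in> {0..y}"
      using that \<sigma>1
      by (auto simp: abs_mult power_abs intro!: mult_right_mono divide_right_mono power_mono)
    then show "ennreal \<bar>(y - t) ^ (n - 1) / fact (n - 1) * (\<sigma> ^ n * nderiv n f (x + \<sigma> * t))\<bar> * indicator {0..y} t
        \<le> ennreal (y ^ (n - 1) / fact (n - 1)) * ennreal \<bar>nderiv n f (x + \<sigma> * t)\<bar>"
      using y by (cases "t \<in> {0..y}") (simp_all add: ennreal_mult'[symmetric] ennreal_leI)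
  qed
  also have "\<dots> = ennreal (y ^ (n - 1) / fact (n - 1)) * (\<integral>\<^sup>+t. ennreal \<bar>nderiv n f (x + \<sigma> * t)\<bar> \<partial>lborel)"
    by (rule nn_integral_cmult) simp
  also have "(\<integral>\<^sup>+t. ennreal \<bar>nderiv n f (x + \<sigma> * t)\<bar> \<partial>lborel) = L1norm (nderiv n f)"
    unfolding L1norm_def using nn_integral_real_affine[of "\<lambda>t. ennreal \<bar>nderiv n f t\<bar>" \<sigma> x] \<sigma> \<sigma>1
    by auto
  finally show ?thesis .
qed

section \<open>The \<open>L\<^sub>1\<close>-norm, second differences and the modulus of smoothness\<close>

lemma L1norm_eq_integral:
  "integrable lborel g \<Longrightarrow> L1norm g = ennreal (\<integral>x. \<bar>g x\<bar> \<partial>lborel)"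
  unfolding L1norm_def by (intro nn_integral_eq_integral) auto

lemma L1norm_add_le:
  assumes [measurable]: "g \<in> borel_measurable borel" "h \<in> borel_measurable borel"
  shows "L1norm (\<lambda>x. g x + h x) \<le> L1norm g + L1norm h"
proof -
  have "L1norm (\<lambda>x. g x + h x) \<le> (\<integral>\<^sup>+x. ennreal \<bar>g x\<bar> + ennreal \<bar>h x\<bar> \<partial>lborel)"
    unfolding L1norm_def by (intro nn_integral_mono) (simp add: ennreal_plus[symmetric] ennreal_leI del: ennreal_plus)
  also have "\<dots> = L1norm g + L1norm h"
    unfolding L1norm_def by (rule nn_integral_add) simp_all
  finally show ?thesis .
qed

lemma L1norm_sum_le:
  assumes [measurable]: "\<And>i. i \<in> I \<Longrightarrow> g i \<in> borel_measurable borel"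
  shows "L1norm (\<lambda>x. \<Sum>i\<in>I. g i x) \<le> (\<Sum>i\<in>I. L1norm (g i))"
  using assms
proof (induction I rule: infinite_finite_induct)
  case (insert i I)
  then have "L1norm (\<lambda>x. \<Sum>i\<in>insert i I. g i x) \<le> L1norm (g i) + L1norm (\<lambda>x. \<Sum>i\<in>I. g i x)"
    by (simp add: L1norm_add_le)
  also have "\<dots> \<le> L1norm (g i) + (\<Sum>i\<in>I. L1norm (g i))"
    using insert by (intro add_left_mono) simp
  finally show ?case
    using insert by simp
qed (simp_all add: L1norm_def)

lemma L1norm_cmult:
  assumes [measurable]: "g \<in> borel_measurable borel"
  shows "L1norm (\<lambda>x. c * g x) = ennreal \<bar>c\<bar> * L1norm g"
  unfolding L1norm_def
  by (subst nn_integral_cmult[symmetric]) (simp_all add: abs_mult ennreal_mult)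

lemma L1norm_shift:
  assumes [measurable]: "g \<in> borel_measurable borel"
  shows "L1norm (\<lambda>x. g (x + c)) = L1norm g"
  unfolding L1norm_def using nn_integral_real_affine[of "\<lambda>x. ennreal \<bar>g x\<bar>" 1 c]
  by (simp add: add.commute)

definition Delta2 :: "(real \<Rightarrow> real) \<Rightarrow> real \<Rightarrow> real \<Rightarrow> real" where
  "Delta2 g t x = g (x + 2 * t) - 2 * g (x + t) + g x"

lemma Delta2_measurable [measurable]:
  assumes [measurable]: "g \<in> borel_measurable borel"
  shows "Delta2 g t \<in> borel_measurable borel"
  unfolding Delta2_def by measurable

lemma omega2_Delta2: "omega2 g h = (SUP t\<in>{-h..h}. \<integral>x. \<bar>Delta2 g t x\<bar> \<partial>lborel)"
  unfolding omega2_def Delta2_def ..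

lemma nn_integral_sym_diff:
  assumes [measurable]: "g \<in> borel_measurable borel"
  shows "(\<integral>\<^sup>+x. ennreal \<bar>sym_diff g x t\<bar> \<partial>lborel) = L1norm (Delta2 g t)"
proof -
  have "L1norm (\<lambda>x. sym_diff g (x + t) t) = L1norm (\<lambda>x. sym_diff g x t)"
    by (rule L1norm_shift) (unfold sym_diff_def, measurable)
  moreover have "(\<lambda>x. sym_diff g (x + t) t) = Delta2 g t"
    by (auto simp: sym_diff_def Delta2_def fun_eq_iff algebra_simps)
  ultimately show ?thesis
    by (simp add: L1norm_def)
qed

lemma Delta2_mult_eq_sum:
  "Delta2 g (real m * h) x = (\<Sum>i<m. \<Sum>j<m. Delta2 g h (x + real (i + j) * h))"
proof -
  define d where "d = (\<lambda>z. g (z + h) - g z)"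
  have telescope: "\<phi> (z + real m * h) - \<phi> z = (\<Sum>i<m. \<phi> (z + real (Suc i) * h) - \<phi> (z + real i * h))"
    for \<phi> :: "real \<Rightarrow> real" and z
    using sum_lessThan_telescope[of "\<lambda>i. \<phi> (z + real i * h)" m] by simp
  have g_telescope: "g (z + real m * h) - g z = (\<Sum>i<m. d (z + real i * h))" for z
    using telescope[of g z] by (simp add: d_def algebra_simps)
  have "Delta2 g (real m * h) x
      = (g ((x + real m * h) + real m * h) - g (x + real m * h)) - (g (x + real m * h) - g x)"
    by (simp add: Delta2_def algebra_simps)
  also have "\<dots> = (\<Sum>i<m. d (x + real i * h + real m * h) - d (x + real i * h))"
    unfolding g_telescope by (simp add: sum_subtractf algebra_simps)
  also have "\<dots> = (\<Sum>i<m. \<Sum>j<m. d (x + real i * h + real (Suc j) * h) - d (x + real i * h + real j * h))"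
    by (simp add: telescope[of d])
  also have "\<dots> = (\<Sum>i<m. \<Sum>j<m. Delta2 g h (x + real (i + j) * h))"
    by (intro sum.cong refl) (simp add: d_def Delta2_def algebra_simps)
  finally show ?thesis .
qed

lemma L1norm_Delta2_mult:
  assumes [measurable]: "g \<in> borel_measurable borel"
  shows "L1norm (Delta2 g (real m * h)) \<le> ennreal (real m ^ 2) * L1norm (Delta2 g h)"
proof -
  have "Delta2 g (real m * h) = (\<lambda>x. \<Sum>i<m. \<Sum>j<m. Delta2 g h (x + real (i + j) * h))"
    by (rule ext) (rule Delta2_mult_eq_sum)
  then have "L1norm (Delta2 g (real m * h)) = L1norm (\<lambda>x. \<Sum>i<m. \<Sum>j<m. Delta2 g h (x + real (i + j) * h))"
    by (simp only:)
  also have "\<dots> \<le> (\<Sum>i<m. L1norm (\<lambda>x. \<Sum>j<m. Delta2 g h (x + real (i + j) * h)))"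
    by (rule L1norm_sum_le) measurable
  also have "\<dots> \<le> (\<Sum>i<m. \<Sum>j<m. L1norm (\<lambda>x. Delta2 g h (x + real (i + j) * h)))"
    by (intro sum_mono L1norm_sum_le) measurable
  also have "\<dots> = (\<Sum>i<m. \<Sum>j<m. L1norm (Delta2 g h))"
    by (simp add: L1norm_shift)
  also have "\<dots> = ennreal (real m ^ 2) * L1norm (Delta2 g h)"
    by (simp add: power2_eq_square ennreal_of_nat_eq_real_of_nat[symmetric] of_nat_mult[symmetric]
        ennreal_mult'[symmetric] mult.assoc[symmetric] del: of_nat_mult)
  finally show ?thesis .
qed

lemma L1norm_Delta2_le:
  assumes [measurable]: "g \<in> borel_measurable borel"
  shows "L1norm (Delta2 g t) \<le> 4 * L1norm g"
proof -
  have shift: "L1norm (\<lambda>x. g (x + c)) = L1norm g" for c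
    by (rule L1norm_shift) measurable
  have "Delta2 g t = (\<lambda>x. (g (x + 2 * t) + - 2 * g (x + t)) + g x)"
    by (simp add: Delta2_def fun_eq_iff)
  then have "L1norm (Delta2 g t) = L1norm (\<lambda>x. (g (x + 2 * t) + - 2 * g (x + t)) + g x)"
    by (simp only:)
  also have "\<dots> \<le> L1norm (\<lambda>x. g (x + 2 * t) + - 2 * g (x + t)) + L1norm g"
    by (rule L1norm_add_le) measurable
  also have "\<dots> \<le> (L1norm (\<lambda>x. g (x + 2 * t)) + L1norm (\<lambda>x. - 2 * g (x + t))) + L1norm g"
    by (intro add_right_mono L1norm_add_le) measurable
  also have "L1norm (\<lambda>x. - 2 * g (x + t)) = 2 * L1norm g"
    using L1norm_cmult[of "\<lambda>x. g (x + t)" "- 2"] by (simp add: shift)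
  also have "L1norm (\<lambda>x. g (x + 2 * t)) + 2 * L1norm g + L1norm g = (1 + 2 + 1) * L1norm g"
    by (simp only: shift distrib_right mult_1)
  finally show ?thesis
    by simp
qed

lemma
  fixes g :: "real \<Rightarrow> real"
  assumes g: "integrable lborel g"
  shows L1norm_Delta2_eq_integral: "L1norm (Delta2 g t) = ennreal (\<integral>x. \<bar>Delta2 g t x\<bar> \<partial>lborel)"
    and integral_abs_Delta2_le: "(\<integral>x. \<bar>Delta2 g t x\<bar> \<partial>lborel) \<le> 4 * (\<integral>x. \<bar>g x\<bar> \<partial>lborel)"
proof -
  have "integrable lborel (\<lambda>x. g (2 * t + 1 * x))" "integrable lborel (\<lambda>x. g (t + 1 * x))"
    by (rule lborel_integrable_real_affine[OF g], simp)+
  then have "integrable lborel (Delta2 g t)"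
    unfolding Delta2_def by (intro Bochner_Integration.integrable_add Bochner_Integration.integrable_diff
        integrable_mult_right g) (simp_all add: add.commute)
  then show eq: "L1norm (Delta2 g t) = ennreal (\<integral>x. \<bar>Delta2 g t x\<bar> \<partial>lborel)"
    by (rule L1norm_eq_integral)
  have "ennreal (\<integral>x. \<bar>Delta2 g t x\<bar> \<partial>lborel) \<le> ennreal (4 * (\<integral>x. \<bar>g x\<bar> \<partial>lborel))"
    using L1norm_Delta2_le[of g t] g unfolding eq L1norm_eq_integral[OF g]
    by (simp add: ennreal_mult)
  then show "(\<integral>x. \<bar>Delta2 g t x\<bar> \<partial>lborel) \<le> 4 * (\<integral>x. \<bar>g x\<bar> \<partial>lborel)"
    by (subst (asm) ennreal_le_iff) auto
qed

lemma
  fixes g :: "real \<Rightarrow> real"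
  assumes g: "integrable lborel g" and h: "h \<ge> 0"
  shows L1norm_Delta2_le_omega2: "\<bar>t\<bar> \<le> h \<Longrightarrow> L1norm (Delta2 g t) \<le> ennreal (omega2 g h)"
    and omega2_nonneg: "omega2 g h \<ge> 0"
    and omega2_le: "omega2 g h \<le> 4 * (\<integral>x. \<bar>g x\<bar> \<partial>lborel)"
proof -
  have bdd: "bdd_above ((\<lambda>t. \<integral>x. \<bar>Delta2 g t x\<bar> \<partial>lborel) ` {-h..h})"
    using integral_abs_Delta2_le[OF g] by (intro bdd_aboveI2) auto
  have le: "(\<integral>x. \<bar>Delta2 g t x\<bar> \<partial>lborel) \<le> omega2 g h" if "\<bar>t\<bar> \<le> h" for t
    unfolding omega2_Delta2 by (rule cSUP_upper[OF _ bdd]) (use that in auto)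
  show "\<bar>t\<bar> \<le> h \<Longrightarrow> L1norm (Delta2 g t) \<le> ennreal (omega2 g h)"
    unfolding L1norm_Delta2_eq_integral[OF g] by (intro ennreal_leI le)
  show "omega2 g h \<ge> 0"
    using le[of 0] h by (simp add: Delta2_def)
  show "omega2 g h \<le> 4 * (\<integral>x. \<bar>g x\<bar> \<partial>lborel)"
    unfolding omega2_Delta2 by (rule cSUP_least) (use h integral_abs_Delta2_le[OF g] in auto)
qed

lemma L1norm_Delta2_le_dilate:
  fixes g :: "real \<Rightarrow> real"
  assumes g: "integrable lborel g" and \<xi>: "\<xi> > 0" and t: "t \<ge> 0"
  shows "L1norm (Delta2 g t) \<le> ennreal ((1 + t / \<xi>) ^ 2 * omega2 g \<xi>)"
proof (cases "t = 0")
  case True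
  then show ?thesis
    by (simp add: Delta2_def L1norm_def)
next
  case False
  then have tq: "t / \<xi> > 0"
    using t \<xi> by simp
  define m where "m = nat \<lceil>t / \<xi>\<rceil>"
  have "real m = of_int \<lceil>t / \<xi>\<rceil>"
    using tq by (simp add: m_def)
  then have m_ge: "real m \<ge> t / \<xi>" and m_le: "real m \<le> 1 + t / \<xi>"
    using of_int_ceiling_le_add_one[of "t / \<xi>"] by linarith+
  then have m_pos: "real m > 0"
    using tq by linarith
  define h where "h = t / real m"
  have th: "t = real m * h" and h0: "h \<ge> 0" and h\<xi>: "h \<le> \<xi>"
    using m_pos m_ge t \<xi> by (simp_all add: h_def field_simps)
  have [measurable]: "g \<in> borel_measurable borel"
    using g by auto
  have "L1norm (Delta2 g t) \<le> ennreal (real m ^ 2) * L1norm (Delta2 g h)"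
    unfolding th by (rule L1norm_Delta2_mult) simp
  also have "\<dots> \<le> ennreal (real m ^ 2) * ennreal (omega2 g \<xi>)"
    using \<xi> h0 h\<xi> by (intro mult_left_mono L1norm_Delta2_le_omega2 g) auto
  also have "\<dots> \<le> ennreal ((1 + t / \<xi>) ^ 2 * omega2 g \<xi>)"
    using omega2_nonneg[OF g, of \<xi>] \<xi> m_pos m_le
    by (simp add: ennreal_mult'[symmetric] ennreal_leI mult_right_mono power_mono)
  finally show ?thesis .
qed

section \<open>The remainder as a kernel integral of the symmetric Taylor remainder\<close>

lemma sum_even_indices:
  fixes c :: "nat \<Rightarrow> real"
  shows "c 0 + (\<Sum>\<rho>=1..N. c (2 * \<rho>)) = (\<Sum>i<2 * N. (1 + (-1) ^ i) / 2 * c i) + c (2 * N)"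
proof (induction N)
  case (Suc N)
  have "(\<Sum>i<2 * Suc N. (1 + (-1) ^ i) / 2 * c i) = (\<Sum>i<2 * N. (1 + (-1) ^ i) / 2 * c i) + c (2 * N)"
    by (simp add: power_add)
  then show ?case
    using Suc by (simp add: algebra_simps)
qed simp

locale Mxi_remainder =
  fixes n \<alpha> :: nat and \<beta> :: real and f :: "real \<Rightarrow> real"
  assumes even_n: "even n" and n_ge: "n \<ge> 2" and \<alpha>_ge: "\<alpha> \<ge> 1"
    and \<beta>_gt: "\<beta> > (real n + 3) / (2 * real \<alpha>)"
    and Cn: "Cn n f" and integrable_nderiv_n: "integrable lborel (nderiv n f)"
begin

lemma moment_order_bound: "real j \<le> real n + 2 \<Longrightarrow> real j + 1 < 2 * real \<alpha> * \<beta>"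
  using \<beta>_gt \<alpha>_ge by (simp add: field_simps)

lemma \<beta>_gt_half: "\<beta> > 1 / (2 * real \<alpha>)"
  using moment_order_bound[of 0] \<alpha>_ge by (simp add: field_simps)

lemma nderiv_measurable: "k \<le> n \<Longrightarrow> nderiv k f \<in> borel_measurable borel"
  by (rule borel_measurable_continuous_onI[OF Cn_continuous_on[OF Cn]])

lemma f_measurable [measurable]: "f \<in> borel_measurable borel"
  using nderiv_measurable[of 0] by simp

lemma nderiv_n_measurable [measurable]: "nderiv n f \<in> borel_measurable borel"
  by (rule nderiv_measurable) simp

lemma abs_f_le:
  fixes x y :: real
  shows "\<bar>f (x + y)\<bar> \<le> (\<Sum>i<n. \<bar>nderiv i f x\<bar> / fact i * \<bar>y\<bar> ^ i)
           + (\<integral>t. \<bar>nderiv n f t\<bar> \<partial>lborel) / fact (n - 1) * \<bar>y\<bar> ^ (n - 1)"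
proof -
  define \<sigma> :: real where "\<sigma> = (if y \<ge> 0 then 1 else -1)"
  have \<sigma>: "\<sigma> = 1 \<or> \<sigma> = -1" and \<sigma>1: "\<bar>\<sigma>\<bar> = 1" and xy: "x + \<sigma> * \<bar>y\<bar> = x + y"
    unfolding \<sigma>_def by auto
  let ?S = "\<Sum>i<n. \<bar>y\<bar> ^ i / fact i * (\<sigma> ^ i * nderiv i f x)"
  have "ennreal \<bar>f (x + y) - ?S\<bar> \<le> ennreal (\<bar>y\<bar> ^ (n - 1) / fact (n - 1)) * L1norm (nderiv n f)"
    using Taylor_remainder_abs_le_L1norm[OF Cn _ abs_ge_zero \<sigma>, of x y] n_ge unfolding xy by simp
  also have "\<dots> = ennreal (\<bar>y\<bar> ^ (n - 1) / fact (n - 1) * (\<integral>t. \<bar>nderiv n f t\<bar> \<partial>lborel))"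
    unfolding L1norm_eq_integral[OF integrable_nderiv_n]
    by (simp add: ennreal_mult'[symmetric] integral_nonneg_AE)
  finally have "\<bar>f (x + y) - ?S\<bar> \<le> (\<integral>t. \<bar>nderiv n f t\<bar> \<partial>lborel) / fact (n - 1) * \<bar>y\<bar> ^ (n - 1)"
    by (subst (asm) ennreal_le_iff) (auto intro!: integral_nonneg_AE simp: mult_ac)
  moreover have "\<bar>?S\<bar> \<le> (\<Sum>i<n. \<bar>nderiv i f x\<bar> / fact i * \<bar>y\<bar> ^ i)"
    by (rule order_trans[OF sum_abs]) (simp add: abs_mult power_abs \<sigma>1 mult_ac)
  ultimately show ?thesis
    using abs_triangle_ineq[of "f (x + y) - ?S" ?S] by simp
qed

lemma integrable_f_kern:
  assumes \<xi>: "\<xi> > 0"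
  shows "integrable lborel (\<lambda>y. f (x + y) * kern \<alpha> \<beta> \<xi> y)"
proof -
  let ?B = "\<lambda>y. (\<Sum>i<n. \<bar>nderiv i f x\<bar> / fact i * (\<bar>y\<bar> ^ i * kern \<alpha> \<beta> \<xi> y))
           + (\<integral>t. \<bar>nderiv n f t\<bar> \<partial>lborel) / fact (n - 1) * (\<bar>y\<bar> ^ (n - 1) * kern \<alpha> \<beta> \<xi> y)"
  have "integrable lborel (\<lambda>y. \<bar>y\<bar> ^ i * kern \<alpha> \<beta> \<xi> y)" if "i \<le> n" for i
    using that by (intro integrable_abs_kern_moment[OF \<alpha>_ge \<xi>] moment_order_bound) simp
  then have "integrable lborel ?B"
    by (intro Bochner_Integration.integrable_add Bochner_Integration.integrable_sum integrable_mult_right) auto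
  then show ?thesis
  proof (rule Bochner_Integration.integrable_bound)
    show "AE y in lborel. norm (f (x + y) * kern \<alpha> \<beta> \<xi> y) \<le> norm (?B y)"
    proof (intro AE_I2)
      fix y
      have kp: "kern \<alpha> \<beta> \<xi> y > 0"
        by (rule kern_pos[OF \<xi>])
      have "\<bar>f (x + y)\<bar> * kern \<alpha> \<beta> \<xi> y \<le> ((\<Sum>i<n. \<bar>nderiv i f x\<bar> / fact i * \<bar>y\<bar> ^ i)
           + (\<integral>t. \<bar>nderiv n f t\<bar> \<partial>lborel) / fact (n - 1) * \<bar>y\<bar> ^ (n - 1)) * kern \<alpha> \<beta> \<xi> y"
        using abs_f_le[of x y] kp by (intro mult_right_mono) auto
      also have "\<dots> = ?B y"
        by (simp add: distrib_left distrib_right sum_distrib_left sum_distrib_right mult_ac)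
      finally have "\<bar>f (x + y) * kern \<alpha> \<beta> \<xi> y\<bar> \<le> ?B y"
        using kp by (simp add: abs_mult)
      then show "norm (f (x + y) * kern \<alpha> \<beta> \<xi> y) \<le> norm (?B y)"
        by simp
    qed
  qed measurable
qed

lemma
  assumes \<xi>: "\<xi> > 0"
  shows integral_f_kern_symmetric: "(\<integral>y. f (x + y) * kern \<alpha> \<beta> \<xi> y \<partial>lborel)
       = (\<integral>y. indicator {0..} y * ((f (x + y) + f (x - y)) * kern \<alpha> \<beta> \<xi> y) \<partial>lborel)"
    and integrable_f_kern_symmetric:
      "integrable lborel (\<lambda>y. indicator {0..} y * ((f (x + y) + f (x - y)) * kern \<alpha> \<beta> \<xi> y))"
proof -
  have "(\<lambda>y. indicator {0..} y * (f (x + y) * kern \<alpha> \<beta> \<xi> y + f (x + - y) * kern \<alpha> \<beta> \<xi> (- y)))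
      = (\<lambda>y. indicator {0..} y * ((f (x + y) + f (x - y)) * kern \<alpha> \<beta> \<xi> y))"
    by (simp add: fun_eq_iff kern_minus algebra_simps)
  then show "(\<integral>y. f (x + y) * kern \<alpha> \<beta> \<xi> y \<partial>lborel)
       = (\<integral>y. indicator {0..} y * ((f (x + y) + f (x - y)) * kern \<alpha> \<beta> \<xi> y) \<partial>lborel)"
    and "integrable lborel (\<lambda>y. indicator {0..} y * ((f (x + y) + f (x - y)) * kern \<alpha> \<beta> \<xi> y))"
    using integral_eq_integral_Ici_reflect[OF integrable_f_kern[OF \<xi>, of x]]
      integrable_Ici_reflect[OF integrable_f_kern[OF \<xi>, of x]]
    by (simp_all only:)
qed

lemma
  assumes \<xi>: "\<xi> > 0"
  shows integrable_kern_sym_rem: "integrable lborel (\<lambda>y. indicator {0..} y * (kern \<alpha> \<beta> \<xi> y * sym_rem n f x y))"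
    and Wconst_integral_kern_sym_rem:
      "Wconst \<alpha> \<beta> \<xi> * (\<integral>y. indicator {0..} y * (kern \<alpha> \<beta> \<xi> y * sym_rem n f x y) \<partial>lborel)
       = Mxi \<alpha> \<beta> \<xi> f x - 2 * nderiv n f x / fact n * (kern_coeff \<alpha> \<beta> n * \<xi> ^ n / 2)
         - (\<Sum>i<n. (1 + (-1) ^ i) * nderiv i f x / fact i * (kern_coeff \<alpha> \<beta> i * \<xi> ^ i / 2))"
proof -
  define A where "A = (\<lambda>y. indicator {0..} y * ((f (x + y) + f (x - y)) * kern \<alpha> \<beta> \<xi> y))"
  define B where "B = (\<lambda>j y. indicator {0..} y * (y ^ j * kern \<alpha> \<beta> \<xi> y))"
  define a where "a = 2 * nderiv n f x / fact n"
  define b where "b = (\<lambda>i. (1 + (-1) ^ i) * nderiv i f x / fact i)"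
  define W where "W = Wconst \<alpha> \<beta> \<xi>"
  have Ai: "integrable lborel A"
    unfolding A_def by (rule integrable_f_kern_symmetric[OF \<xi>])
  have Bi: "integrable lborel (\<lambda>y. c * B j y)" if "j \<le> n" for c j
    unfolding B_def using that
    by (intro integrable_mult_right integrable_kern_moment[OF \<alpha>_ge \<xi>] moment_order_bound) simp
  have WB: "W * (\<integral>y. B j y \<partial>lborel) = kern_coeff \<alpha> \<beta> j * \<xi> ^ j / 2" if "j \<le> n" for j
    unfolding B_def W_def using that by (intro Wconst_kern_moment[OF \<alpha>_ge \<xi>] moment_order_bound) simp
  have WA: "W * (\<integral>y. A y \<partial>lborel) = Mxi \<alpha> \<beta> \<xi> f x"
    unfolding A_def W_def Mxi_kern integral_f_kern_symmetric[OF \<xi>] ..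
  have pw: "(\<lambda>y. indicator {0..} y * (kern \<alpha> \<beta> \<xi> y * sym_rem n f x y))
      = (\<lambda>y. A y - a * B n y - (\<Sum>i<n. b i * B i y))"
    by (auto simp: fun_eq_iff sym_rem_def indicator_def A_def B_def a_def b_def right_diff_distrib
        sum_distrib_left mult_ac intro!: sum.cong)
  have int_sum: "integrable lborel (\<lambda>y. \<Sum>i<n. b i * B i y)"
    using Bi by (intro Bochner_Integration.integrable_sum) simp
  have int_AB: "integrable lborel (\<lambda>y. A y - a * B n y)"
    using Ai Bi[of n] by (intro Bochner_Integration.integrable_diff) simp_all
  show "integrable lborel (\<lambda>y. indicator {0..} y * (kern \<alpha> \<beta> \<xi> y * sym_rem n f x y))"
    unfolding pw using int_AB int_sum by (rule Bochner_Integration.integrable_diff)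
  have "(\<integral>y. indicator {0..} y * (kern \<alpha> \<beta> \<xi> y * sym_rem n f x y) \<partial>lborel)
      = (\<integral>y. A y \<partial>lborel) - a * (\<integral>y. B n y \<partial>lborel) - (\<Sum>i<n. b i * (\<integral>y. B i y \<partial>lborel))"
    unfolding pw Bochner_Integration.integral_diff[OF int_AB int_sum]
      Bochner_Integration.integral_diff[OF Ai Bi[of n a, OF order_refl]]
    using Bi by (subst Bochner_Integration.integral_sum) simp_all
  then have "W * (\<integral>y. indicator {0..} y * (kern \<alpha> \<beta> \<xi> y * sym_rem n f x y) \<partial>lborel)
      = Mxi \<alpha> \<beta> \<xi> f x - a * (W * (\<integral>y. B n y \<partial>lborel)) - (\<Sum>i<n. b i * (W * (\<integral>y. B i y \<partial>lborel)))"
    by (simp add: right_diff_distrib WA sum_distrib_left mult_ac)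
  also have "(\<Sum>i<n. b i * (W * (\<integral>y. B i y \<partial>lborel))) = (\<Sum>i<n. b i * (kern_coeff \<alpha> \<beta> i * \<xi> ^ i / 2))"
    by (intro sum.cong) (simp_all add: WB)
  also have "a * (W * (\<integral>y. B n y \<partial>lborel)) = a * (kern_coeff \<alpha> \<beta> n * \<xi> ^ n / 2)"
    by (simp add: WB)
  finally show "Wconst \<alpha> \<beta> \<xi> * (\<integral>y. indicator {0..} y * (kern \<alpha> \<beta> \<xi> y * sym_rem n f x y) \<partial>lborel)
       = Mxi \<alpha> \<beta> \<xi> f x - 2 * nderiv n f x / fact n * (kern_coeff \<alpha> \<beta> n * \<xi> ^ n / 2)
         - (\<Sum>i<n. (1 + (-1) ^ i) * nderiv i f x / fact i * (kern_coeff \<alpha> \<beta> i * \<xi> ^ i / 2))"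
    unfolding W_def a_def b_def .
qed

lemma Kfun_eq_integral_sym_rem:
  assumes \<xi>: "\<xi> > 0"
  shows "Kfun n \<alpha> \<beta> \<xi> f x
       = Wconst \<alpha> \<beta> \<xi> * (\<integral>y. indicator {0..} y * (kern \<alpha> \<beta> \<xi> y * sym_rem n f x y) \<partial>lborel)"
proof -
  define c where "c = (\<lambda>j. nderiv j f x * kern_coeff \<alpha> \<beta> j * \<xi> ^ j / fact j)"
  obtain N where nN: "n = 2 * N"
    using even_n by (auto elim!: evenE)
  have c0: "c 0 = f x"
    unfolding c_def using kern_coeff_0[OF \<alpha>_ge \<beta>_gt_half] by simp
  have even_odd: "c 0 + (\<Sum>\<rho>=1..N. c (2 * \<rho>)) = (\<Sum>i<n. (1 + (-1) ^ i) / 2 * c i) + c n"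
    unfolding nN by (rule sum_even_indices)
  have even_terms: "(\<Sum>\<rho>=1..n div 2. nderiv (2 * \<rho>) f x / fact (2 * \<rho>)
          * (Gamma ((2 * real \<rho> + 1) / (2 * real \<alpha>)) * Gamma (\<beta> - (2 * real \<rho> + 1) / (2 * real \<alpha>))
             / (Gamma (1 / (2 * real \<alpha>)) * Gamma (\<beta> - 1 / (2 * real \<alpha>))))
          * \<xi> ^ (2 * \<rho>)) = (\<Sum>\<rho>=1..N. c (2 * \<rho>))"
    unfolding nN c_def kern_coeff_def by (intro sum.cong) auto
  have top_term: "2 * nderiv n f x / fact n * (kern_coeff \<alpha> \<beta> n * \<xi> ^ n / 2) = c n"
    unfolding c_def by simp
  have lower_terms: "(\<Sum>i<n. (1 + (-1) ^ i) * nderiv i f x / fact i * (kern_coeff \<alpha> \<beta> i * \<xi> ^ i / 2))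
      = (\<Sum>i<n. (1 + (-1) ^ i) / 2 * c i)"
    unfolding c_def by (intro sum.cong) auto
  show ?thesis
    unfolding Wconst_integral_kern_sym_rem[OF \<xi>] Kfun_def even_terms top_term lower_terms
    using even_odd c0 by linarith
qed

end

section \<open>The \<open>L\<^sub>1\<close>-estimate of the remainder\<close>

lemma nn_integral_dilation_factor:
  fixes \<xi> y :: real
  assumes \<xi>: "\<xi> > 0" and y: "y \<ge> 0"
  shows "(\<integral>\<^sup>+t. ennreal ((1 + t / \<xi>) ^ 2) * indicator {0..y} t \<partial>lborel)
         = ennreal (y + y ^ 2 / \<xi> + y ^ 3 / (3 * \<xi> ^ 2))"
proof -
  define F where "F = (\<lambda>t::real. t + t ^ 2 / \<xi> + t ^ 3 / (3 * \<xi> ^ 2))"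
  have "((\<lambda>t. (1 + t / \<xi>) ^ 2) has_integral (F y - F 0)) {0..y}"
  proof (rule fundamental_theorem_of_calculus[OF y])
    fix t :: real
    have "(F has_real_derivative (1 + 2 * t / \<xi> + 3 * t ^ 2 / (3 * \<xi> ^ 2))) (at t)"
      unfolding F_def using \<xi> by (auto intro!: derivative_eq_intros simp: power2_eq_square)
    also have "1 + 2 * t / \<xi> + 3 * t ^ 2 / (3 * \<xi> ^ 2) = (1 + t / \<xi>) ^ 2"
      using \<xi> by (simp add: power2_eq_square field_simps)
    finally show "(F has_vector_derivative (1 + t / \<xi>) ^ 2) (at t within {0..y})"
      by (simp add: has_real_derivative_iff_has_vector_derivative has_vector_derivative_at_within)
  qed
  then have "((\<lambda>t. (1 + t / \<xi>) ^ 2) has_integral (y + y ^ 2 / \<xi> + y ^ 3 / (3 * \<xi> ^ 2))) {0..y}"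
    by (simp add: F_def)
  from nn_integral_has_integral_lebesgue'[OF _ this] show ?thesis
    by simp
qed

definition Kfun_weight :: "nat \<Rightarrow> nat \<Rightarrow> real \<Rightarrow> real \<Rightarrow> real \<Rightarrow> real" where
  "Kfun_weight n \<alpha> \<beta> \<xi> y = Wconst \<alpha> \<beta> \<xi> * kern \<alpha> \<beta> \<xi> y * y ^ (n - 1) / fact (n - 1)"

definition Kfun_majorant ::
    "nat \<Rightarrow> nat \<Rightarrow> real \<Rightarrow> real \<Rightarrow> (real \<Rightarrow> real) \<Rightarrow> real \<Rightarrow> real \<Rightarrow> real \<Rightarrow> ennreal" where
  "Kfun_majorant n \<alpha> \<beta> \<xi> f x y t = ennreal (Kfun_weight n \<alpha> \<beta> \<xi> y
      * (if 0 \<le> t \<and> t \<le> y then \<bar>sym_diff (nderiv n f) x t\<bar> else 0))"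

definition Kfun_const :: "nat \<Rightarrow> nat \<Rightarrow> real \<Rightarrow> real" where
  "Kfun_const n \<alpha> \<beta> = 1 / (6 * Gamma (1 / (2 * real \<alpha>)) * Gamma (\<beta> - 1 / (2 * real \<alpha>)) * fact (n - 1))
     * (3 * Gamma ((real n + 1) / (2 * real \<alpha>)) * Gamma (\<beta> - (real n + 1) / (2 * real \<alpha>))
        + 3 * Gamma ((real n + 2) / (2 * real \<alpha>)) * Gamma (\<beta> - (real n + 2) / (2 * real \<alpha>))
        + Gamma ((real n + 3) / (2 * real \<alpha>)) * Gamma (\<beta> - (real n + 3) / (2 * real \<alpha>)))"

lemma Kfun_const_eq:
  assumes "\<alpha> \<ge> 1" "\<beta> > 1 / (2 * real \<alpha>)"
  shows "Kfun_const n \<alpha> \<beta>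
       = (3 * kern_coeff \<alpha> \<beta> n + 3 * kern_coeff \<alpha> \<beta> (n + 1) + kern_coeff \<alpha> \<beta> (n + 2)) / (6 * fact (n - 1))"
proof -
  have "Gamma (1 / (2 * real \<alpha>)) > 0" "Gamma (\<beta> - 1 / (2 * real \<alpha>)) > 0"
    using assms by (auto intro!: Gamma_real_pos)
  then show ?thesis
    unfolding Kfun_const_def kern_coeff_def by (simp add: field_simps add_ac)
qed

context Mxi_remainder
begin

lemma Kfun_weight_nonneg:
  assumes "\<xi> > 0" "y \<ge> 0"
  shows "Kfun_weight n \<alpha> \<beta> \<xi> y \<ge> 0"
  using Wconst_pos[OF \<alpha>_ge \<beta>_gt_half assms(1)] kern_pos[OF assms(1), of \<alpha> \<beta> y] assms(2)
  unfolding Kfun_weight_def by (intro divide_nonneg_pos mult_nonneg_nonneg) simp_all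

lemma abs_Kfun_le_majorant:
  assumes \<xi>: "\<xi> > 0"
  shows "ennreal \<bar>Kfun n \<alpha> \<beta> \<xi> f x\<bar> \<le> (\<integral>\<^sup>+y. \<integral>\<^sup>+t. Kfun_majorant n \<alpha> \<beta> \<xi> f x y t \<partial>lborel \<partial>lborel)"
proof -
  define I where "I = (\<lambda>y. indicator {0..} y * (kern \<alpha> \<beta> \<xi> y * sym_rem n f x y))"
  define W where "W = Wconst \<alpha> \<beta> \<xi>"
  have W0: "W \<ge> 0"
    unfolding W_def using Wconst_pos[OF \<alpha>_ge \<beta>_gt_half \<xi>] by simp
  have "ennreal \<bar>Kfun n \<alpha> \<beta> \<xi> f x\<bar> = ennreal W * ennreal (norm (\<integral>y. I y \<partial>lborel))"
    unfolding Kfun_eq_integral_sym_rem[OF \<xi>] I_def W_def using W0 by (simp add: abs_mult ennreal_mult' W_def)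
  also have "\<dots> \<le> ennreal W * (\<integral>\<^sup>+y. norm (I y) \<partial>lborel)"
    using integrable_kern_sym_rem[OF \<xi>] unfolding I_def
    by (intro mult_left_mono integral_norm_bound_ennreal) simp_all
  also have "\<dots> = (\<integral>\<^sup>+y. ennreal W * ennreal (norm (I y)) \<partial>lborel)"
    by (rule nn_integral_cmult[symmetric]) (unfold I_def sym_rem_def, measurable)
  also have "\<dots> \<le> (\<integral>\<^sup>+y. \<integral>\<^sup>+t. Kfun_majorant n \<alpha> \<beta> \<xi> f x y t \<partial>lborel \<partial>lborel)"
  proof (intro nn_integral_mono)
    fix y :: real
    show "ennreal W * ennreal (norm (I y)) \<le> (\<integral>\<^sup>+t. Kfun_majorant n \<alpha> \<beta> \<xi> f x y t \<partial>lborel)"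
    proof (cases "y \<ge> 0")
      case True
      let ?D = "\<lambda>t. ennreal \<bar>sym_diff (nderiv n f) x t\<bar> * indicator {0..y} t"
      have kp: "kern \<alpha> \<beta> \<xi> y > 0"
        by (rule kern_pos[OF \<xi>])
      have "ennreal W * ennreal (norm (I y)) = ennreal (W * kern \<alpha> \<beta> \<xi> y) * ennreal \<bar>sym_rem n f x y\<bar>"
        using True kp W0 by (simp add: I_def abs_mult ennreal_mult' mult.assoc)
      also have "\<dots> \<le> ennreal (W * kern \<alpha> \<beta> \<xi> y) * (ennreal (y ^ (n - 1) / fact (n - 1)) * (\<integral>\<^sup>+t. ?D t \<partial>lborel))"
        using n_ge by (intro mult_left_mono sym_rem_abs_le[OF Cn _ even_n True]) simp_all
      also have "\<dots> = (\<integral>\<^sup>+t. ennreal (Kfun_weight n \<alpha> \<beta> \<xi> y) * ?D t \<partial>lborel)"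
        using W0 kp True
        by (subst nn_integral_cmult, unfold sym_diff_def, measurable)
           (simp add: Kfun_weight_def W_def ennreal_mult'[symmetric] mult.assoc[symmetric])
      also have "\<dots> = (\<integral>\<^sup>+t. Kfun_majorant n \<alpha> \<beta> \<xi> f x y t \<partial>lborel)"
        using Kfun_weight_nonneg[OF \<xi> True]
        by (intro nn_integral_cong) (auto simp: Kfun_majorant_def indicator_def ennreal_mult'[symmetric])
      finally show ?thesis .
    qed (simp add: I_def)
  qed
  finally show ?thesis .
qed

lemma L1norm_Kfun_le_iterated:
  assumes \<xi>: "\<xi> > 0"
  shows "L1norm (Kfun n \<alpha> \<beta> \<xi> f)
         \<le> (\<integral>\<^sup>+y. \<integral>\<^sup>+t. \<integral>\<^sup>+x. Kfun_majorant n \<alpha> \<beta> \<xi> f x y t \<partial>lborel \<partial>lborel \<partial>lborel)"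
proof -
  have meas_xy: "(\<lambda>(x, y). \<integral>\<^sup>+t. Kfun_majorant n \<alpha> \<beta> \<xi> f x y t \<partial>lborel) \<in> borel_measurable (lborel \<Otimes>\<^sub>M lborel)"
    and meas_xt: "(\<lambda>(x, t). Kfun_majorant n \<alpha> \<beta> \<xi> f x y t) \<in> borel_measurable (lborel \<Otimes>\<^sub>M lborel)" for y
    unfolding Kfun_majorant_def Kfun_weight_def sym_diff_def by measurable
  have "L1norm (Kfun n \<alpha> \<beta> \<xi> f) \<le> (\<integral>\<^sup>+x. \<integral>\<^sup>+y. \<integral>\<^sup>+t. Kfun_majorant n \<alpha> \<beta> \<xi> f x y t \<partial>lborel \<partial>lborel \<partial>lborel)"
    unfolding L1norm_def by (intro nn_integral_mono abs_Kfun_le_majorant[OF \<xi>])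
  also have "\<dots> = (\<integral>\<^sup>+y. \<integral>\<^sup>+x. \<integral>\<^sup>+t. Kfun_majorant n \<alpha> \<beta> \<xi> f x y t \<partial>lborel \<partial>lborel \<partial>lborel)"
    by (rule lborel_pair.Fubini'[OF meas_xy, symmetric])
  also have "\<dots> = (\<integral>\<^sup>+y. \<integral>\<^sup>+t. \<integral>\<^sup>+x. Kfun_majorant n \<alpha> \<beta> \<xi> f x y t \<partial>lborel \<partial>lborel \<partial>lborel)"
    by (intro nn_integral_cong lborel_pair.Fubini'[OF meas_xt, symmetric])
  finally show ?thesis .
qed

lemma nn_integral_Kfun_majorant_le:
  assumes \<xi>: "\<xi> > 0"
  shows "(\<integral>\<^sup>+x. Kfun_majorant n \<alpha> \<beta> \<xi> f x y t \<partial>lborel)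
         \<le> ennreal (Kfun_weight n \<alpha> \<beta> \<xi> y * omega2 (nderiv n f) \<xi>) * (ennreal ((1 + t / \<xi>) ^ 2) * indicator {0..y} t)"
proof (cases "t \<in> {0..y}")
  case True
  then have t: "t \<ge> 0" and w0: "Kfun_weight n \<alpha> \<beta> \<xi> y \<ge> 0"
    using Kfun_weight_nonneg[OF \<xi>, of y] by auto
  have "(\<integral>\<^sup>+x. Kfun_majorant n \<alpha> \<beta> \<xi> f x y t \<partial>lborel)
      = (\<integral>\<^sup>+x. ennreal (Kfun_weight n \<alpha> \<beta> \<xi> y) * ennreal \<bar>sym_diff (nderiv n f) x t\<bar> \<partial>lborel)"
    using True w0 by (intro nn_integral_cong) (simp add: Kfun_majorant_def ennreal_mult'[symmetric])
  also have "\<dots> = ennreal (Kfun_weight n \<alpha> \<beta> \<xi> y) * L1norm (Delta2 (nderiv n f) t)"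
  proof -
    have "(\<lambda>x. ennreal \<bar>sym_diff (nderiv n f) x t\<bar>) \<in> borel_measurable lborel"
      unfolding sym_diff_def by measurable
    then show ?thesis
      by (simp add: nn_integral_cmult nn_integral_sym_diff)
  qed
  also have "\<dots> \<le> ennreal (Kfun_weight n \<alpha> \<beta> \<xi> y) * ennreal ((1 + t / \<xi>) ^ 2 * omega2 (nderiv n f) \<xi>)"
    by (intro mult_left_mono L1norm_Delta2_le_dilate[OF integrable_nderiv_n \<xi> t]) simp
  finally show ?thesis
    using True w0 by (simp add: ennreal_mult'[symmetric] mult_ac)
next
  case False
  then have "Kfun_majorant n \<alpha> \<beta> \<xi> f x y t = 0" for x
    by (auto simp: Kfun_majorant_def)
  then show ?thesis
    by simp
qed

lemma nn_integral_Kfun_weight_moments: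
  assumes \<xi>: "\<xi> > 0" and \<omega>: "\<omega> \<ge> 0"
  shows "(\<integral>\<^sup>+y. ennreal (Kfun_weight n \<alpha> \<beta> \<xi> y * \<omega> * (y + y ^ 2 / \<xi> + y ^ 3 / (3 * \<xi> ^ 2))) * indicator {0..} y \<partial>lborel)
         = ennreal (Kfun_const n \<alpha> \<beta> * \<omega> * \<xi> ^ n)"
proof -
  define B where "B = (\<lambda>j y. indicator {0..} y * (y ^ j * kern \<alpha> \<beta> \<xi> y))"
  define M where "M = (\<lambda>j. \<integral>y. B j y \<partial>lborel)"
  define W where "W = Wconst \<alpha> \<beta> \<xi>"
  define Q where "Q = (\<lambda>y. indicator {0..} y * (Kfun_weight n \<alpha> \<beta> \<xi> y * \<omega> * (y + y ^ 2 / \<xi> + y ^ 3 / (3 * \<xi> ^ 2))))"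
  have Bi: "integrable lborel (B j)" if "j \<le> n + 2" for j
    unfolding B_def using that by (intro integrable_kern_moment[OF \<alpha>_ge \<xi>] moment_order_bound) simp
  have WM: "W * M j = kern_coeff \<alpha> \<beta> j * \<xi> ^ j / 2" if "j \<le> n + 2" for j
    unfolding M_def B_def W_def using that by (intro Wconst_kern_moment[OF \<alpha>_ge \<xi>] moment_order_bound) simp
  obtain m where nm: "n = Suc m"
    using n_ge by (cases n) auto
  have Q_eq: "Q = (\<lambda>y. W * \<omega> / fact (n - 1) * (B n y + 1 / \<xi> * B (n + 1) y + 1 / (3 * \<xi> ^ 2) * B (n + 2) y))"
    unfolding nm
    by (auto simp: fun_eq_iff Q_def Kfun_weight_def W_def B_def indicator_def field_simps power2_eq_square
        power3_eq_cube nm)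
  have int: "integrable lborel Q"
    unfolding Q_eq by (intro integrable_mult_right Bochner_Integration.integrable_add Bi) auto
  have "(\<integral>\<^sup>+y. ennreal (Kfun_weight n \<alpha> \<beta> \<xi> y * \<omega> * (y + y ^ 2 / \<xi> + y ^ 3 / (3 * \<xi> ^ 2))) * indicator {0..} y \<partial>lborel)
      = (\<integral>\<^sup>+y. ennreal (Q y) \<partial>lborel)"
    by (intro nn_integral_cong) (auto simp: Q_def indicator_def)
  also have "\<dots> = ennreal (\<integral>y. Q y \<partial>lborel)"
    using Kfun_weight_nonneg[OF \<xi>] \<omega> \<xi>
    by (intro nn_integral_eq_integral int) (auto simp: Q_def indicator_def)
  also have "(\<integral>y. Q y \<partial>lborel) = \<omega> / fact (n - 1) * (W * M n + 1 / \<xi> * (W * M (n + 1)) + 1 / (3 * \<xi> ^ 2) * (W * M (n + 2)))"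
    unfolding Q_eq M_def by (simp add: Bochner_Integration.integral_add Bi integrable_mult_right algebra_simps)
  also have "\<dots> = Kfun_const n \<alpha> \<beta> * \<omega> * \<xi> ^ n"
  proof -
    have m0: "W * M n = kern_coeff \<alpha> \<beta> n * \<xi> ^ n / 2"
      and m1: "W * M (n + 1) = kern_coeff \<alpha> \<beta> (n + 1) * \<xi> ^ (n + 1) / 2"
      and m2: "W * M (n + 2) = kern_coeff \<alpha> \<beta> (n + 2) * \<xi> ^ (n + 2) / 2"
      by (simp_all add: WM)
    show ?thesis
      unfolding m0 m1 m2 Kfun_const_eq[OF \<alpha>_ge \<beta>_gt_half]
      using \<xi> by (simp add: power_add field_simps power2_eq_square)
  qed
  finally show ?thesis .
qed

lemma L1norm_Kfun_le:
  assumes \<xi>: "\<xi> > 0"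
  shows "L1norm (Kfun n \<alpha> \<beta> \<xi> f) \<le> ennreal (Kfun_const n \<alpha> \<beta> * omega2 (nderiv n f) \<xi> * \<xi> ^ n)"
proof -
  let ?w = "Kfun_weight n \<alpha> \<beta> \<xi>" and ?\<omega> = "omega2 (nderiv n f) \<xi>"
  have \<omega>: "?\<omega> \<ge> 0"
    using omega2_nonneg[OF integrable_nderiv_n] \<xi> by simp
  have "L1norm (Kfun n \<alpha> \<beta> \<xi> f) \<le> (\<integral>\<^sup>+y. \<integral>\<^sup>+t. \<integral>\<^sup>+x. Kfun_majorant n \<alpha> \<beta> \<xi> f x y t \<partial>lborel \<partial>lborel \<partial>lborel)"
    by (rule L1norm_Kfun_le_iterated[OF \<xi>])
  also have "\<dots> \<le> (\<integral>\<^sup>+y. \<integral>\<^sup>+t. ennreal (?w y * ?\<omega>) * (ennreal ((1 + t / \<xi>) ^ 2) * indicator {0..y} t) \<partial>lborel \<partial>lborel)"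
    by (intro nn_integral_mono nn_integral_Kfun_majorant_le[OF \<xi>])
  also have "\<dots> = (\<integral>\<^sup>+y. ennreal (?w y * ?\<omega> * (y + y ^ 2 / \<xi> + y ^ 3 / (3 * \<xi> ^ 2))) * indicator {0..} y \<partial>lborel)"
  proof (intro nn_integral_cong)
    fix y :: real
    show "(\<integral>\<^sup>+t. ennreal (?w y * ?\<omega>) * (ennreal ((1 + t / \<xi>) ^ 2) * indicator {0..y} t) \<partial>lborel)
        = ennreal (?w y * ?\<omega> * (y + y ^ 2 / \<xi> + y ^ 3 / (3 * \<xi> ^ 2))) * indicator {0..} y"
    proof (cases "y \<ge> 0")
      case True
      then show ?thesis
        using Kfun_weight_nonneg[OF \<xi> True] \<omega> \<xi>
        by (subst nn_integral_cmult)
           (simp_all add: nn_integral_dilation_factor ennreal_mult'[symmetric] del: ennreal_plus)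
    qed simp
  qed
  also have "\<dots> = ennreal (Kfun_const n \<alpha> \<beta> * ?\<omega> * \<xi> ^ n)"
    by (rule nn_integral_Kfun_weight_moments[OF \<xi> \<omega>])
  finally show ?thesis .
qed

lemma Kfun_const_nonneg: "Kfun_const n \<alpha> \<beta> \<ge> 0"
  using kern_coeff_nonneg[OF \<alpha>_ge moment_order_bound, of n] kern_coeff_nonneg[OF \<alpha>_ge moment_order_bound, of "n + 1"]
    kern_coeff_nonneg[OF \<alpha>_ge moment_order_bound, of "n + 2"]
  unfolding Kfun_const_eq[OF \<alpha>_ge \<beta>_gt_half] by simp

lemma L1norm_Kfun_tendsto_0: "((\<lambda>\<eta>. L1norm (Kfun n \<alpha> \<beta> \<eta> f)) \<longlongrightarrow> 0) (at_right 0)"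
proof -
  define C where "C = Kfun_const n \<alpha> \<beta> * (4 * (\<integral>x. \<bar>nderiv n f x\<bar> \<partial>lborel))"
  have bound: "L1norm (Kfun n \<alpha> \<beta> \<eta> f) \<le> ennreal (C * \<eta> ^ n)" if \<eta>: "\<eta> > 0" for \<eta>
  proof -
    have "L1norm (Kfun n \<alpha> \<beta> \<eta> f) \<le> ennreal (Kfun_const n \<alpha> \<beta> * omega2 (nderiv n f) \<eta> * \<eta> ^ n)"
      by (rule L1norm_Kfun_le[OF \<eta>])
    also have "\<dots> \<le> ennreal (C * \<eta> ^ n)"
      unfolding C_def using \<eta> Kfun_const_nonneg omega2_le[OF integrable_nderiv_n, of \<eta>]
      by (intro ennreal_leI mult_right_mono mult_left_mono) auto
    finally show ?thesis .
  qed
  have "((\<lambda>\<eta>. ennreal (C * \<eta> ^ n)) \<longlongrightarrow> ennreal (C * 0 ^ n)) (at_right 0)"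
    by (intro tendsto_ennrealI tendsto_intros)
  then have lim: "((\<lambda>\<eta>. ennreal (C * \<eta> ^ n)) \<longlongrightarrow> 0) (at_right 0)"
    using n_ge by (simp add: power_0_left)
  show ?thesis
  proof (rule tendsto_sandwich[OF _ _ tendsto_const lim])
    show "\<forall>\<^sub>F \<eta> in at_right 0. L1norm (Kfun n \<alpha> \<beta> \<eta> f) \<le> ennreal (C * \<eta> ^ n)"
      using bound by (rule eventually_mono[OF eventually_at_right_less])
  qed simp
qed

lemma Kfun_measurable [measurable]: "Kfun n \<alpha> \<beta> \<eta> f \<in> borel_measurable borel"
  unfolding Kfun_def Mxi_def
  by (intro borel_measurable_diff borel_measurable_times borel_measurable_sum borel_measurable_divide
      nderiv_measurable borel_measurable_const f_measurable) (measurable, auto)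

lemma L1norm_Mxi_minus_tendsto_0:
  assumes int: "\<forall>m\<in>{1..n div 2}. integrable lborel (nderiv (2 * m) f)"
  shows "((\<lambda>\<eta>. L1norm (\<lambda>x. Mxi \<alpha> \<beta> \<eta> f x - f x)) \<longlongrightarrow> 0) (at_right 0)"
proof -
  define c where "c = (\<lambda>\<rho> \<eta>::real. kern_coeff \<alpha> \<beta> (2 * \<rho>) * \<eta> ^ (2 * \<rho>) / fact (2 * \<rho>))"
  define N where "N = (\<lambda>\<rho>. \<integral>x. \<bar>nderiv (2 * \<rho>) f x\<bar> \<partial>lborel)"
  define h where "h = (\<lambda>\<eta>. L1norm (Kfun n \<alpha> \<beta> \<eta> f) + (\<Sum>\<rho>=1..n div 2. ennreal (\<bar>c \<rho> \<eta>\<bar> * N \<rho>)))"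
  have meas: "\<rho> \<in> {1..n div 2} \<Longrightarrow> nderiv (2 * \<rho>) f \<in> borel_measurable borel" for \<rho>
    by (rule nderiv_measurable) (simp, presburger)
  have bound: "L1norm (\<lambda>x. Mxi \<alpha> \<beta> \<eta> f x - f x) \<le> h \<eta>" for \<eta>
  proof -
    have "(\<lambda>x. Mxi \<alpha> \<beta> \<eta> f x - f x) = (\<lambda>x. Kfun n \<alpha> \<beta> \<eta> f x + (\<Sum>\<rho>=1..n div 2. c \<rho> \<eta> * nderiv (2 * \<rho>) f x))"
      unfolding Kfun_def c_def kern_coeff_def by (auto simp: fun_eq_iff mult_ac intro!: sum.cong)
    then have "L1norm (\<lambda>x. Mxi \<alpha> \<beta> \<eta> f x - f x)
        \<le> L1norm (Kfun n \<alpha> \<beta> \<eta> f) + L1norm (\<lambda>x. \<Sum>\<rho>=1..n div 2. c \<rho> \<eta> * nderiv (2 * \<rho>) f x)"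
      using meas by (simp add: L1norm_add_le)
    also have "\<dots> \<le> L1norm (Kfun n \<alpha> \<beta> \<eta> f) + (\<Sum>\<rho>=1..n div 2. L1norm (\<lambda>x. c \<rho> \<eta> * nderiv (2 * \<rho>) f x))"
      using meas by (intro add_left_mono L1norm_sum_le) simp
    also have "\<dots> = h \<eta>"
      unfolding h_def using meas int
      by (intro arg_cong2[where f = "(+)"] sum.cong refl)
         (simp_all add: L1norm_cmult L1norm_eq_integral N_def ennreal_mult'[symmetric])
    finally show ?thesis .
  qed
  have "(h \<longlongrightarrow> 0 + (\<Sum>\<rho>=1..n div 2. ennreal (\<bar>c \<rho> 0\<bar> * N \<rho>))) (at_right 0)"
    unfolding h_def c_def
    by (intro tendsto_add L1norm_Kfun_tendsto_0 tendsto_sum tendsto_ennrealI tendsto_intros) simp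
  then have lim: "(h \<longlongrightarrow> 0) (at_right 0)"
    by (simp add: c_def power_0_left)
  show ?thesis
    by (rule tendsto_sandwich[OF _ _ tendsto_const lim]) (simp_all add: bound)
qed

end

theorem theorem4:
  fixes n \<alpha> :: nat and \<beta> \<xi> :: real and f :: "real \<Rightarrow> real"
  assumes "even n" and "n \<ge> 2" and "\<alpha> \<ge> 1"
    and "\<beta> > (real n + 3) / (2 * real \<alpha>)"
    and "Cn n f" and "integrable lborel (nderiv n f)"
    and "\<xi> > 0"
  shows "L1norm (Kfun n \<alpha> \<beta> \<xi> f)
           \<le> ennreal (1 / (6 * Gamma (1 / (2 * real \<alpha>)) * Gamma (\<beta> - 1 / (2 * real \<alpha>)) * fact (n - 1))
              * (3 * Gamma ((real n + 1) / (2 * real \<alpha>)) * Gamma (\<beta> - (real n + 1) / (2 * real \<alpha>))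
                 + 3 * Gamma ((real n + 2) / (2 * real \<alpha>)) * Gamma (\<beta> - (real n + 2) / (2 * real \<alpha>))
                 + Gamma ((real n + 3) / (2 * real \<alpha>)) * Gamma (\<beta> - (real n + 3) / (2 * real \<alpha>)))
              * omega2 (nderiv n f) \<xi> * \<xi> ^ n)
         \<and> ((\<lambda>\<eta>. L1norm (Kfun n \<alpha> \<beta> \<eta> f)) \<longlongrightarrow> 0) (at_right 0)
         \<and> ((\<forall>m\<in>{1..n div 2}. integrable lborel (nderiv (2 * m) f)) \<longrightarrow>
           ((\<lambda>\<eta>. L1norm (\<lambda>x. Mxi \<alpha> \<beta> \<eta> f x - f x)) \<longlongrightarrow> 0) (at_right 0))"
proof -
  interpret Mxi_remainder n \<alpha> \<beta> f
    using assms by unfold_locales auto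
  show ?thesis
    using L1norm_Kfun_le[OF \<open>\<xi> > 0\<close>] L1norm_Kfun_tendsto_0 L1norm_Mxi_minus_tendsto_0
    unfolding Kfun_const_def by blast
qed

end
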